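(* Let $p\geq 2$ and $q\in\,]1,2]$ with $\frac1p+\frac1q=1$. Let $\mathcal{C}\subset\mathbb{R}^m$ be a centrally symmetric compact convex set with nonempty interior. The following assertions are equivalent: (a) (Set mid-convex property) There exists $\alpha>0$ such that for all $x,y\in\mathcal{C}$, $\frac{x+y}{2}+\alpha\|x-y\|_{\mathcal{C}}^p\,B_{\|\cdot\|_{\mathcal{C}}}(1)\subset\mathcal{C}$. (b) (Global scaling inequality) There exists $\alpha>0$ such that for all $x\in\mathcal{C}$, $y\in\partial\mathcal{C}$ and $d\in\mathbb{R}^m$ with $d\in N_{\mathcal{C}}(y)$ (equivalently $y\in\arg\max_{v\in\mathcal{C}}\langle d,v\rangle$), we have $\langle d, y-x\rangle\geq \alpha\|d\|_{\mathcal{C}^\circ}\|y-x\|_{\mathcal{C}}^p$. (c) (Set modulus UC) There exists $\alpha>0$ such that $\delta_{\|\cdot\|_{\mathcal{C}}}(\epsilon)\geq\alpha\epsilon^p$ for every $\epsilon\in[0,2]$. (d) (Support Hölder-smooth on the sphere) There exists $c>0$ such that $\sigma_{\mathcal{C}}$ is differentiable at every point of $S_{\|\cdot\|_{\mathcal{C}^\circ}}(1)$ and for all $d_1,d_2\in S_{\|\cdot\|_{\mathcal{C}^\circ}}(1)$, $\|\nabla\sigma_{\mathcal{C}}(d_1)-\nabla\sigma_{\mathcal{C}}(d_2)\|_{\mathcal{C}}\leq c\,\|d_1-d_2\|_{\mathcal{C}^\circ}^{q-1}=c\,\|d_1-d_2\|_{\mathcal{C}^\circ}^{1/(p-1)}$.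 (e) (Support US) $\sigma_{\mathcal{C}}^q$ is differentiable on $\mathbb{R}^m$ and there exists $c>0$ such that $\sigma_{\mathcal{C}}^q$ is $(c,q)$-uniformly smooth on $\mathbb{R}^m$ with respect to $\|\cdot\|_{\mathcal{C}^\circ}$, i.e. for all $d,d'\in\mathbb{R}^m$ and $\lambda\in[0,1]$, $\sigma_{\mathcal{C}}^q(\lambda d+(1-\lambda)d')+\frac{c}{q}\lambda(1-\lambda)\|d-d'\|_{\mathcal{C}^\circ}^q\geq\lambda\sigma_{\mathcal{C}}^q(d)+(1-\lambda)\sigma_{\mathcal{C}}^q(d')$. (f) (Gauge UC) There exists $\alpha>0$ such that $\|\cdot\|_{\mathcal{C}}^p$ is $(\alpha,p)$-uniformly convex with respect to $\|\cdot\|_{\mathcal{C}}$, i.e. for all $x,y\in\mathbb{R}^m$ and $\lambda\in[0,1]$, $\|\lambda x+(1-\lambda)y\|_{\mathcal{C}}^p+\frac{\alpha}{p}\lambda(1-\lambda)\|x-y\|_{\mathcal{C}}^p\leq\lambda\|x\|_{\mathcal{C}}^p+(1-\lambda)\|y\|_{\mathcal{C}}^p$.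
   Context: For a centrally symmetric compact convex body $\mathcal{C}\subset\mathbb{R}^m$ with nonempty interior, its gauge $\|x\|_{\mathcal{C}}=\inf\{\lambda\geq0: x\in\lambda\mathcal{C}\}$ is a norm whose unit ball is $\mathcal{C}$. The polar is $\mathcal{C}^\circ=\{d:\langle x,d\rangle\leq1\ \forall x\in\mathcal{C}\}$; the support function is $\sigma_{\mathcal{C}}(d)=\sup_{v\in\mathcal{C}}\langle v,d\rangle$, and $\sigma_{\mathcal{C}}=\|\cdot\|_{\mathcal{C}^\circ}$, which is the dual norm of $\|\cdot\|_{\mathcal{C}}$. For a norm $\|\cdot\|$, $B_{\|\cdot\|}(1)$ and $S_{\|\cdot\|}(1)$ denote its closed unit ball and unit sphere. The normal cone at $y\in\mathcal{C}$ is $N_{\mathcal{C}}(y)=\{d:\langle d,x-y\rangle\leq0\ \forall x\in\mathcal{C}\}$. The modulus of convexity of $\|\cdot\|_{\mathcal{C}}$ is, for $\epsilon\in[0,2]$, $\delta_{\|\cdot\|_{\mathcal{C}}}(\epsilon)=\inf\{1-\|(x+y)/2\|_{\mathcal{C}}: \|x\|_{\mathcal{C}}=\|y\|_{\mathcal{C}}=1,\ \|x-y\|_{\mathcal{C}}\geq\epsilon\}$. *)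

theory Defs
  imports "HOL-Analysis.Analysis"
begin

definition gauge :: "'a::real_vector set \<Rightarrow> 'a \<Rightarrow> real" where
  "gauge C x = Inf {t. t \<ge> 0 \<and> x \<in> (\<lambda>v. t *\<^sub>R v) ` C}"

definition polar :: "'a::real_inner set \<Rightarrow> 'a set" where
  "polar C = {d. \<forall>x\<in>C. inner x d \<le> 1}"

definition support_fun :: "'a::real_inner set \<Rightarrow> 'a \<Rightarrow> real" where
  "support_fun C d = Sup ((\<lambda>v. inner v d) ` C)"

definition normal_cone :: "'a::real_inner set \<Rightarrow> 'a \<Rightarrow> 'a set" where
  "normal_cone C y = {d. \<forall>x\<in>C. inner d (x - y) \<le> 0}"

definition modulus_convexity :: "'a::real_vector set \<Rightarrow> real \<Rightarrow> real" where
  "modulus_convexity C \<epsilon> = Inf {1 - gauge C ((1/2) *\<^sub>R (x + y)) | x y.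
      gauge C x = 1 \<and> gauge C y = 1 \<and> gauge C (x - y) \<ge> \<epsilon>}"

definition grad :: "('a::real_inner \<Rightarrow> real) \<Rightarrow> 'a \<Rightarrow> 'a" where
  "grad f x = (THE g. (f has_derivative (\<lambda>h. inner g h)) (at x))"

end

theory Submission
  imports Defs
begin

(* Everything is reduced to the scaling inequality on the unit spheres,
     alpha * |y - x|^p <= <d, y - x>   whenever |x| = |y| = 1, sigma d = 1 and <y, d> = 1,
   where |.| is the gauge of C and sigma its support function, the dual norm.  It is the
   case of (b) with y on the boundary and d a unit normal there, and it follows from (a) and
   (c) by testing the midpoint of x and y against d.  Conversely, rescaled to arbitrary x and z
   it gives the first-order bound
     |x|^p >= |z|^p + p |z|^(p-1) <v, x - z> + beta |x - z|^p   (v a norming functional of z),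
   whose average over the two ends of a segment is (f); and (f) at l = 1/2 gives (a) back.
   On the dual side, adding the inequality for the maximizers y1, y2 of <., d1> and <., d2>
   shows that the maximizer map is (q-1)-Hoelder.  It is the gradient of sigma, which gives (d),
   and multiplied by q sigma^(q-1) it is the gradient of sigma^q, which gives (e).  Conversely,
   smoothness of sigma at d in the direction v of a norming functional of x - y bounds
   t |x - y| - K t^q by <d, y - x> for every t > 0, and optimising over t returns the scaling
   inequality with the conjugate exponent p. *)

section \<open>Real powers\<close>

lemma powr_add_le_add_powr:
  fixes a b k :: real
  assumes "0 < k" "k \<le> 1" "0 \<le> a" "0 \<le> b"
  shows "(a + b) powr k \<le> a powr k + b powr k"
proof (cases "a + b = 0")
  case True then show ?thesis using assms by auto
next
  case False
  define c where "c = a + b"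
  have c: "c > 0" using False assms c_def by auto
  have "a / c \<le> (a / c) powr k" "b / c \<le> (b / c) powr k"
    using powr_mono'[of k 1] assms c c_def by (auto simp: divide_le_eq_1)
  moreover have "a / c + b / c = 1" using c unfolding c_def by (simp add: add_divide_distrib[symmetric])
  ultimately have "c powr k * 1 \<le> c powr k * ((a / c) powr k + (b / c) powr k)"
    using c by (intro mult_left_mono) auto
  also have "\<dots> = a powr k + b powr k"
    using c assms by (simp add: powr_divide distrib_left)
  finally show ?thesis using c_def by simp
qed

lemma add_powr_le_powr_add:
  fixes a b k :: real
  assumes "1 \<le> k" "0 \<le> a" "0 \<le> b"
  shows "a powr k + b powr k \<le> (a + b) powr k"
proof (cases "a + b = 0")
  case True
  then have "a = 0" "b = 0" using assms by auto
  then show ?thesis by simp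
next
  case False
  define c where "c = a + b"
  have c: "c > 0" using False assms c_def by auto
  have "(a / c) powr k \<le> a / c" "(b / c) powr k \<le> b / c"
    using powr_mono'[of 1 k] assms c c_def by (auto simp: divide_le_eq_1)
  moreover have "a / c + b / c = 1" using c unfolding c_def by (simp add: add_divide_distrib[symmetric])
  ultimately have "c powr k * ((a / c) powr k + (b / c) powr k) \<le> c powr k * 1"
    using c by (intro mult_left_mono) auto
  moreover have "c powr k * ((a / c) powr k + (b / c) powr k) = a powr k + b powr k"
    using c assms by (simp add: powr_divide distrib_left)
  ultimately show ?thesis using c_def by simp
qed

lemma powr_add_le_two_powr:
  fixes a b p :: real
  assumes "0 \<le> a" "0 \<le> b" "0 < p"
  shows "(a + b) powr p \<le> 2 powr p * (a powr p + b powr p)"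
proof -
  have "(a + b) powr p \<le> (2 * max a b) powr p" using assms by (intro powr_mono2) auto
  also have "\<dots> = 2 powr p * max a b powr p" using assms by (simp add: powr_mult)
  also have "max a b powr p \<le> a powr p + b powr p" using assms by (auto simp: max_def)
  finally show ?thesis by simp
qed

lemma powr_diff_le_diff_powr:
  fixes a b k :: real
  assumes "0 < k" "k \<le> 1" "0 \<le> b" "b \<le> a"
  shows "a powr k - b powr k \<le> (a - b) powr k"
  using powr_add_le_add_powr[of k b "a - b"] assms by simp

lemma powr_above_tangent:
  fixes k u w :: real
  assumes "1 \<le> k" "0 \<le> u" "0 \<le> w"
  shows "w powr k + k * w powr (k - 1) * (u - w) \<le> u powr k"
proof -
  consider "w = 0" | "u = 0" "w > 0" | "u > 0" "w > 0" using assms by linarith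
  then show ?thesis
  proof cases
    case 2
    have "w powr k + k * w powr (k - 1) * (u - w) = (1 - k) * w powr k"
      using 2 powr_mult_base[of w "k - 1"] by (simp add: algebra_simps)
    also have "\<dots> \<le> 0" using assms by (simp add: mult_nonpos_nonneg)
    finally show ?thesis using 2 by simp
  next
    case 3
    have "((\<lambda>x. x powr k) has_real_derivative k * w powr (k - 1)) (at w within {0<..})"
      using 3 by (intro has_field_derivative_at_within[OF has_real_derivative_powr])
    with 3 have "k * w powr (k - 1) * (u - w) \<le> u powr k - w powr k"
      by (intro convex_on_imp_above_tangent[OF powr_convex[OF assms(1)]])
        (auto simp: interior_open intro: convex_connected)
    then show ?thesis by simp
  qed simp
qed

lemma powr_ge_tangent_at_one_plus_powr:
  fixes p r :: real
  assumes "2 \<le> p" "0 \<le> r"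
  shows "1 + p * (r - 1) + \<bar>r - 1\<bar> powr p \<le> r powr p"
proof (cases "1 \<le> r")
  case True
  define f where "f x = x powr p - 1 - p * (x - 1) - (x - 1) powr p" for x :: real
  have "f 1 \<le> f r"
  proof (rule DERIV_nonneg_imp_increasing_open[OF True])
    fix x assume x: "1 < x" "x < r"
    have "DERIV f x :> p * (x powr (p - 1) - 1 powr (p - 1) - (x - 1) powr (p - 1))"
      unfolding f_def using x by (auto intro!: derivative_eq_intros simp: algebra_simps)
    moreover have "0 \<le> p * (x powr (p - 1) - 1 powr (p - 1) - (x - 1) powr (p - 1))"
      using add_powr_le_powr_add[of "p - 1" 1 "x - 1"] x assms by (intro mult_nonneg_nonneg) auto
    ultimately show "\<exists>y. DERIV f x :> y \<and> 0 \<le> y" by blast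
  next
    show "continuous_on {1..r} f" unfolding f_def using assms
      by (intro continuous_intros continuous_on_powr') auto
  qed
  then show ?thesis using True unfolding f_def by simp
next
  case False
  define f where "f x = x powr p - 1 - p * (x - 1) - (1 - x) powr p" for x :: real
  have "f 1 \<le> f r"
  proof (rule DERIV_nonpos_imp_decreasing_open[of r 1])
    fix x assume x: "r < x" "x < 1"
    have "DERIV f x :> p * (x powr (p - 1) + (1 - x) powr (p - 1) - 1 powr (p - 1))"
      unfolding f_def using x assms by (auto intro!: derivative_eq_intros simp: algebra_simps)
    moreover have "p * (x powr (p - 1) + (1 - x) powr (p - 1) - 1 powr (p - 1)) \<le> 0"
      using add_powr_le_powr_add[of "p - 1" x "1 - x"] x assms by (intro mult_nonneg_nonpos) auto
    ultimately show "\<exists>y. DERIV f x :> y \<and> y \<le> 0" by blast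
  next
    show "continuous_on {r..1} f" unfolding f_def using assms
      by (intro continuous_intros continuous_on_powr') auto
  qed (use False in auto)
  then show ?thesis using False unfolding f_def by (simp add: abs_if)
qed

lemma powr_two_point_lower:
  fixes l p :: real
  assumes "0 \<le> l" "l \<le> 1" "1 \<le> p"
  shows "l * (1 - l) * (1/2) powr (p - 1) \<le> l * (1 - l) powr p + (1 - l) * l powr p"
proof -
  have "(1/2) powr (p - 1) \<le> max l (1 - l) powr (p - 1)"
    using assms by (intro powr_mono2) (auto simp: max_def)
  also have "\<dots> \<le> (1 - l) powr (p - 1) + l powr (p - 1)"
    by (simp add: max_def)
  finally have "l * (1 - l) * (1/2) powr (p - 1)
      \<le> l * (1 - l) * ((1 - l) powr (p - 1) + l powr (p - 1))"
    using assms by (intro mult_left_mono) auto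
  also have "\<dots> = l * (1 - l) powr p + (1 - l) * l powr p"
  proof -
    have "(1 - l) powr p = (1 - l) * (1 - l) powr (p - 1)" "l powr p = l * l powr (p - 1)"
      using assms powr_mult_base[of l "p - 1"] powr_mult_base[of "1 - l" "p - 1"] by simp_all
    then show ?thesis by (simp only:) (simp add: algebra_simps)
  qed
  finally show ?thesis .
qed

lemma powr_two_point_upper:
  fixes l q :: real
  assumes "0 \<le> l" "l \<le> 1" "1 \<le> q"
  shows "l * (1 - l) powr q + (1 - l) * l powr q \<le> 2 * l * (1 - l)"
proof -
  have "(1 - l) powr q \<le> 1 - l" "l powr q \<le> l"
    using powr_mono'[of 1 q] assms by auto
  then have "l * (1 - l) powr q \<le> l * (1 - l)" "(1 - l) * l powr q \<le> (1 - l) * l"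
    using assms by (simp_all add: mult_left_mono)
  then show ?thesis by (simp add: algebra_simps)
qed

lemma conjugate_exponents_product:
  fixes p q :: real
  assumes "1 < p" "1 < q" "1/p + 1/q = 1"
  shows "(p - 1) * (q - 1) = 1"
proof -
  have "q + p = p * q" using assms by (simp add: field_simps)
  then show ?thesis by (simp add: algebra_simps)
qed

lemma powr_conjugate_lower_bound:
  fixes p q \<gamma> K A :: real
  assumes pq: "(p - 1) * (q - 1) = 1" and "1 < p" "1 < q" "0 \<le> \<gamma>" "0 < K" "0 \<le> A"
    and tradeoff: "\<And>t. t > 0 \<Longrightarrow> t * \<gamma> - K * t powr q \<le> A"
  shows "\<gamma> powr p / (2 * (2 * K) powr (p - 1)) \<le> A"
proof (cases "\<gamma> = 0")
  case True
  then show ?thesis using assms by simp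
next
  case False
  then have \<gamma>: "\<gamma> > 0" using assms by simp
  define t where "t = (\<gamma> / (2 * K)) powr (p - 1)"
  have t: "t > 0" using \<gamma> assms t_def by simp
  have "t powr (q - 1) = (\<gamma> / (2 * K)) powr ((p - 1) * (q - 1))"
    unfolding t_def by (simp add: powr_powr)
  also have "\<dots> = \<gamma> / (2 * K)" using pq \<gamma> assms by simp
  finally have "t powr q = t * (\<gamma> / (2 * K))"
    using t powr_mult_base[of t "q - 1"] by (simp add: mult.assoc)
  then have "K * t powr q = t * \<gamma> / 2"
    using assms by (simp add: field_simps)
  then have "t * \<gamma> / 2 \<le> A" using tradeoff[OF t] by linarith
  moreover have "t * \<gamma> / 2 = \<gamma> powr p / (2 * (2 * K) powr (p - 1))"
    using \<gamma> assms powr_mult_base[of \<gamma> "p - 1"] unfolding t_def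
    by (simp add: powr_divide field_simps)
  ultimately show ?thesis by simp
qed

section \<open>Two-point inequalities from first-order bounds\<close>

lemma two_point_linear_cancel:
  assumes "linear h"
  shows "l * h (x - (l *\<^sub>R x + (1 - l) *\<^sub>R y)) + (1 - l) * h (y - (l *\<^sub>R x + (1 - l) *\<^sub>R y)) = 0"
proof -
  have "x - (l *\<^sub>R x + (1 - l) *\<^sub>R y) = (1 - l) *\<^sub>R (x - y)"
    "y - (l *\<^sub>R x + (1 - l) *\<^sub>R y) = (- l) *\<^sub>R (x - y)"
    by (simp_all add: algebra_simps)
  then show ?thesis
    by (simp only: linear_scale[OF assms]) (simp add: algebra_simps)
qed

lemma two_point_convexity_of_first_order_lower_bound:
  fixes f N :: "'a::real_vector \<Rightarrow> real" and D :: "'a \<Rightarrow> 'a \<Rightarrow> real"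
  assumes lin: "\<And>z. linear (D z)"
    and N_nonneg: "\<And>x. 0 \<le> N x" and N_scale: "\<And>c x. N (c *\<^sub>R x) = \<bar>c\<bar> * N x"
    and lower: "\<And>x z. f z + D z (x - z) + \<beta> * N (x - z) powr p \<le> f x"
    and "0 \<le> \<beta>" "1 \<le> p" "0 \<le> l" "l \<le> 1"
  shows "f (l *\<^sub>R x + (1 - l) *\<^sub>R y) + \<beta> * (1/2) powr (p - 1) * l * (1 - l) * N (x - y) powr p
    \<le> l * f x + (1 - l) * f y"
proof -
  define z where "z = l *\<^sub>R x + (1 - l) *\<^sub>R y"
  have "x - z = (1 - l) *\<^sub>R (x - y)" "y - z = (- l) *\<^sub>R (x - y)"
    unfolding z_def by (simp_all add: algebra_simps)
  then have "N (x - z) = (1 - l) * N (x - y)" "N (y - z) = l * N (x - y)"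
    using N_scale[of "1 - l"] N_scale[of "- l"] assms by simp_all
  then have Nx: "N (x - z) powr p = (1 - l) powr p * N (x - y) powr p"
    and Ny: "N (y - z) powr p = l powr p * N (x - y) powr p"
    using assms N_nonneg by (simp_all add: powr_mult)
  have "l * (f z + D z (x - z) + \<beta> * N (x - z) powr p)
      + (1 - l) * (f z + D z (y - z) + \<beta> * N (y - z) powr p) \<le> l * f x + (1 - l) * f y"
    using lower[of z x] lower[of z y] assms by (intro add_mono mult_left_mono) auto
  moreover have "l * (f z + D z (x - z) + \<beta> * N (x - z) powr p)
      + (1 - l) * (f z + D z (y - z) + \<beta> * N (y - z) powr p)
      = f z + \<beta> * (l * (1 - l) powr p + (1 - l) * l powr p) * N (x - y) powr p"
    using two_point_linear_cancel[OF lin[of z], of l x y] unfolding Nx Ny z_def[symmetric]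
    by (simp add: algebra_simps)
  moreover have "\<beta> * (1/2) powr (p - 1) * l * (1 - l) * N (x - y) powr p
      \<le> \<beta> * (l * (1 - l) powr p + (1 - l) * l powr p) * N (x - y) powr p"
    using powr_two_point_lower[of l p] assms
    by (intro mult_right_mono) (auto simp: mult_left_mono mult_ac)
  ultimately show ?thesis unfolding z_def by linarith
qed

lemma two_point_smoothness_of_first_order_upper_bound:
  fixes f N :: "'a::real_vector \<Rightarrow> real" and D :: "'a \<Rightarrow> 'a \<Rightarrow> real"
  assumes lin: "\<And>z. linear (D z)"
    and N_nonneg: "\<And>x. 0 \<le> N x" and N_scale: "\<And>c x. N (c *\<^sub>R x) = \<bar>c\<bar> * N x"
    and upper: "\<And>x z. f x \<le> f z + D z (x - z) + L * N (x - z) powr q"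
    and "0 \<le> L" "1 \<le> q" "0 \<le> l" "l \<le> 1"
  shows "l * f x + (1 - l) * f y
    \<le> f (l *\<^sub>R x + (1 - l) *\<^sub>R y) + 2 * L * l * (1 - l) * N (x - y) powr q"
proof -
  define z where "z = l *\<^sub>R x + (1 - l) *\<^sub>R y"
  have "x - z = (1 - l) *\<^sub>R (x - y)" "y - z = (- l) *\<^sub>R (x - y)"
    unfolding z_def by (simp_all add: algebra_simps)
  then have "N (x - z) = (1 - l) * N (x - y)" "N (y - z) = l * N (x - y)"
    using N_scale[of "1 - l"] N_scale[of "- l"] assms by simp_all
  then have Nx: "N (x - z) powr q = (1 - l) powr q * N (x - y) powr q"
    and Ny: "N (y - z) powr q = l powr q * N (x - y) powr q"
    using assms N_nonneg by (simp_all add: powr_mult)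
  have "l * f x + (1 - l) * f y \<le> l * (f z + D z (x - z) + L * N (x - z) powr q)
      + (1 - l) * (f z + D z (y - z) + L * N (y - z) powr q)"
    using upper[of x z] upper[of y z] assms by (intro add_mono mult_left_mono) auto
  also have "\<dots> = f z + L * (l * (1 - l) powr q + (1 - l) * l powr q) * N (x - y) powr q"
    using two_point_linear_cancel[OF lin[of z], of l x y] unfolding Nx Ny z_def[symmetric]
    by (simp add: algebra_simps)
  also have "\<dots> \<le> f z + L * (2 * l * (1 - l)) * N (x - y) powr q"
    using powr_two_point_upper[of l q] assms by (simp add: mult_left_mono mult_right_mono)
  finally show ?thesis unfolding z_def by (simp add: mult_ac)
qed

section \<open>Gradients\<close>

lemma has_derivative_of_powr_remainder:
  fixes f :: "'a::real_inner \<Rightarrow> real"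
  assumes "1 < q" "0 \<le> M"
    and remainder: "\<And>z. \<bar>f z - f a - inner G (z - a)\<bar> \<le> M * norm (z - a) powr q"
  shows "(f has_derivative inner G) (at a)"
  unfolding has_derivative_iff_norm
proof (intro conjI)
  show "bounded_linear (inner G)" by (rule bounded_linear_inner_right)
  have "((\<lambda>y. norm (y - a)) \<longlongrightarrow> 0) (at a)"
    using tendsto_norm_zero[OF LIM_zero[OF tendsto_ident_at[of a UNIV]]] by simp
  then have lim: "((\<lambda>y. M * norm (y - a) powr (q - 1)) \<longlongrightarrow> 0) (at a)"
    using assms tendsto_mult_right_zero tendsto_zero_powrI[where b = "q - 1"] by force
  have "norm (f y - f a - inner G (y - a)) / norm (y - a) \<le> M * norm (y - a) powr (q - 1)"
    if "y \<noteq> a" for y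
  proof -
    have n: "norm (y - a) > 0" using that by simp
    then have "norm (f y - f a - inner G (y - a)) \<le> (M * norm (y - a) powr (q - 1)) * norm (y - a)"
      using remainder[of y] powr_mult_base[of "norm (y - a)" "q - 1"] by (simp add: mult_ac)
    then show ?thesis using n by (simp add: divide_le_eq)
  qed
  then show "((\<lambda>y. norm (f y - f a - inner G (y - a)) / norm (y - a)) \<longlongrightarrow> 0) (at a)"
    by (intro tendsto_sandwich[OF _ _ tendsto_const lim])
      (auto simp: eventually_at_filter)
qed

lemma grad_eqI:
  fixes f :: "'a::real_inner \<Rightarrow> real"
  assumes "(f has_derivative inner G) (at a)"
  shows "grad f a = G"
  unfolding grad_def
proof (rule the_equality)
  fix G' assume "(f has_derivative inner G') (at a)"
  then have "inner G' = inner G" using has_derivative_unique assms by blast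
  then have "inner (G' - G) (G' - G) = 0" by (metis inner_diff_left right_minus_eq)
  then show "G' = G" by simp
qed (use assms in simp)

lemma derivative_eq_subgradient:
  fixes f :: "'a::real_inner \<Rightarrow> real"
  assumes "(f has_derivative f') (at a)"
    and subgradient: "\<And>z. f a + inner y (z - a) \<le> f z"
  shows "f' = inner y"
proof -
  have "((\<lambda>z. f z - inner y z) has_derivative (\<lambda>h. f' h - inner y h)) (at a)"
    using assms(1) by (intro derivative_intros)
  moreover have "\<forall>\<^sub>F z in at a. f a - inner y a \<le> f z - inner y z"
    using subgradient by (intro always_eventually allI) (simp add: inner_diff_right algebra_simps)
  ultimately have "(\<lambda>h. f' h - inner y h) = (\<lambda>h. 0)" by (rule has_derivative_local_min)
  then show ?thesis by (auto simp: fun_eq_iff)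
qed

(* The first six definitions are the clauses (a)-(f) of the theorem verbatim, so that the
   theorem follows by unfolding them; the last two are the normalized forms of (a) and (b)
   that the proofs work with. *)

definition set_mid_convex :: "'a::real_vector set \<Rightarrow> real \<Rightarrow> bool" where
  "set_mid_convex C p \<longleftrightarrow> (\<exists>\<alpha>>0. \<forall>x\<in>C. \<forall>y\<in>C.
     {(1/2) *\<^sub>R (x + y) + (\<alpha> * gauge C (x - y) powr p) *\<^sub>R b | b. gauge C b \<le> 1} \<subseteq> C)"

definition scaling_inequality :: "'a::real_inner set \<Rightarrow> real \<Rightarrow> bool" where
  "scaling_inequality C p \<longleftrightarrow> (\<exists>\<alpha>>0. \<forall>x\<in>C. \<forall>y\<in>frontier C. \<forall>d. d \<in> normal_cone C y \<longrightarrow>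
     inner d (y - x) \<ge> \<alpha> * gauge (polar C) d * gauge C (y - x) powr p)"

definition modulus_convexity_power_bound :: "'a::real_vector set \<Rightarrow> real \<Rightarrow> bool" where
  "modulus_convexity_power_bound C p \<longleftrightarrow>
     (\<exists>\<alpha>>0. \<forall>\<epsilon>\<in>{0..2}. modulus_convexity C \<epsilon> \<ge> \<alpha> * \<epsilon> powr p)"

definition support_holder_smooth :: "'a::real_inner set \<Rightarrow> real \<Rightarrow> bool" where
  "support_holder_smooth C q \<longleftrightarrow>
     (\<exists>c>0. (\<forall>d. gauge (polar C) d = 1 \<longrightarrow> support_fun C differentiable (at d)) \<and>
       (\<forall>d1 d2. gauge (polar C) d1 = 1 \<longrightarrow> gauge (polar C) d2 = 1 \<longrightarrow>
          gauge C (grad (support_fun C) d1 - grad (support_fun C) d2)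
            \<le> c * gauge (polar C) (d1 - d2) powr (q - 1)))"

definition support_uniformly_smooth :: "'a::real_inner set \<Rightarrow> real \<Rightarrow> bool" where
  "support_uniformly_smooth C q \<longleftrightarrow>
     (\<lambda>d. support_fun C d powr q) differentiable_on UNIV \<and>
     (\<exists>c>0. \<forall>d d'. \<forall>l\<in>{0..1}.
        support_fun C (l *\<^sub>R d + (1 - l) *\<^sub>R d') powr q
          + c / q * l * (1 - l) * gauge (polar C) (d - d') powr q
        \<ge> l * support_fun C d powr q + (1 - l) * support_fun C d' powr q)"

definition gauge_uniformly_convex :: "'a::real_vector set \<Rightarrow> real \<Rightarrow> bool" where
  "gauge_uniformly_convex C p \<longleftrightarrow> (\<exists>\<alpha>>0. \<forall>x y. \<forall>l\<in>{0..1}.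
     gauge C (l *\<^sub>R x + (1 - l) *\<^sub>R y) powr p + \<alpha> / p * l * (1 - l) * gauge C (x - y) powr p
     \<le> l * gauge C x powr p + (1 - l) * gauge C y powr p)"

definition gauge_mid_convex :: "'a::real_vector set \<Rightarrow> real \<Rightarrow> bool" where
  "gauge_mid_convex C p \<longleftrightarrow>
     (\<exists>\<alpha>>0. \<forall>x\<in>C. \<forall>y\<in>C. gauge C ((1/2) *\<^sub>R (x + y)) + \<alpha> * gauge C (x - y) powr p \<le> 1)"

definition sphere_scaling_inequality :: "'a::real_inner set \<Rightarrow> real \<Rightarrow> bool" where
  "sphere_scaling_inequality C p \<longleftrightarrow> (\<exists>\<alpha>>0. \<forall>x y d.
     gauge C x = 1 \<longrightarrow> gauge C y = 1 \<longrightarrow> support_fun C d = 1 \<longrightarrow> inner y d = 1 \<longrightarrow>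
     \<alpha> * gauge C (y - x) powr p \<le> inner d (y - x))"

section \<open>Gauge and support function of a symmetric convex body\<close>

locale symmetric_convex_body =
  fixes C :: "'a::euclidean_space set"
  assumes compact: "compact C" and convex: "convex C" and symmetric: "\<And>x. x \<in> C \<Longrightarrow> - x \<in> C"
    and interior_nonempty: "interior C \<noteq> {}"
begin

abbreviation g where "g \<equiv> gauge C"
abbreviation \<sigma> where "\<sigma> \<equiv> support_fun C"

lemma obtain_cball_subset:
  obtains r where "0 < r" "cball 0 r \<subseteq> C"
proof -
  obtain a e where e: "e > 0" "ball a e \<subseteq> C"
    using interior_nonempty mem_interior by blast
  have "w \<in> C" if "norm w < e" for w
  proof -
    have "a + w \<in> C" "a - w \<in> C"
      using e that by (auto simp: subset_iff dist_norm)
    then have "(1/2) *\<^sub>R (a + w) + (1 - 1/2) *\<^sub>R (- a + w) \<in> C"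
      using symmetric[of "a - w"] by (intro convexD[OF convex]) auto
    moreover have "(1/2) *\<^sub>R (a + w) + (1 - 1/2) *\<^sub>R (- a + w) = w"
      by (simp add: algebra_simps scaleR_2[symmetric])
    ultimately show ?thesis by simp
  qed
  then have "cball 0 (e/2) \<subseteq> C" using e by (auto simp: subset_iff)
  then show ?thesis using e that[of "e/2"] by simp
qed

lemma obtain_norm_bound:
  obtains R where "0 < R" "\<forall>x\<in>C. norm x \<le> R"
  using compact_imp_bounded[OF compact] bounded_pos by blast

lemma zero_mem: "0 \<in> C"
proof -
  obtain r where "0 < r" "cball 0 r \<subseteq> C" by (rule obtain_cball_subset)
  then show ?thesis by auto
qed

lemma mem_scaled_iff: "t > 0 \<Longrightarrow> x \<in> (\<lambda>v. t *\<^sub>R v) ` C \<longleftrightarrow> x /\<^sub>R t \<in> C"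
  by (auto simp: image_iff intro!: bexI[of _ "x /\<^sub>R t"])

lemma mem_zero_scaled_iff: "x \<in> (\<lambda>v. 0 *\<^sub>R v) ` C \<longleftrightarrow> x = 0"
  using zero_mem by auto

lemma gauge_set_nonempty: "\<exists>t. t \<ge> 0 \<and> x \<in> (\<lambda>v. t *\<^sub>R v) ` C"
proof (cases "x = 0")
  case True then show ?thesis using mem_zero_scaled_iff by blast
next
  case False
  obtain r where r: "0 < r" "cball 0 r \<subseteq> C" by (rule obtain_cball_subset)
  have "x /\<^sub>R (norm x / r) \<in> C" using False r by (auto simp: subset_iff)
  then show ?thesis using mem_scaled_iff[of "norm x / r" x] r False
    by (intro exI[of _ "norm x / r"]) auto
qed

lemma gauge_set_bdd_below: "bdd_below {t. t \<ge> 0 \<and> x \<in> (\<lambda>v. t *\<^sub>R v) ` C}"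
  by (rule bdd_belowI[of _ 0]) auto

lemma gauge_nonneg: "0 \<le> g x"
  unfolding gauge_def using gauge_set_nonempty[of x] by (intro cInf_greatest) auto

lemma gauge_zero [simp]: "g 0 = 0"
proof -
  have "g 0 \<le> 0" unfolding gauge_def
    by (rule cInf_lower[OF _ gauge_set_bdd_below]) (use mem_zero_scaled_iff in auto)
  then show ?thesis using gauge_nonneg[of 0] by simp
qed

lemma gauge_less_imp_mem: assumes "g x < t" "t > 0" shows "x /\<^sub>R t \<in> C"
proof -
  obtain s where s: "s \<ge> 0" "x \<in> (\<lambda>v. s *\<^sub>R v) ` C" "s < t"
    using cInf_lessD[of "{t. t \<ge> 0 \<and> x \<in> (\<lambda>v. t *\<^sub>R v) ` C}" t] gauge_set_nonempty[of x] assms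
    unfolding gauge_def by auto
  show ?thesis
  proof (cases "s = 0")
    case True then show ?thesis using s mem_zero_scaled_iff zero_mem by auto
  next
    case False
    then have xs: "x /\<^sub>R s \<in> C" using s mem_scaled_iff by auto
    have "(s / t) *\<^sub>R (x /\<^sub>R s) + (1 - s / t) *\<^sub>R 0 \<in> C"
      using s assms False by (intro convexD[OF convex xs zero_mem]) auto
    then show ?thesis using False by (simp add: inverse_eq_divide)
  qed
qed

lemma gauge_le_iff: assumes "t > 0" shows "g x \<le> t \<longleftrightarrow> x /\<^sub>R t \<in> C"
proof
  assume "x /\<^sub>R t \<in> C"
  then show "g x \<le> t" unfolding gauge_def
    using assms mem_scaled_iff by (intro cInf_lower[OF _ gauge_set_bdd_below]) auto
next
  assume le: "g x \<le> t"
  define f where "f n = x /\<^sub>R (t + inverse (real (Suc n)))" for n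
  have "f n \<in> C" for n
  proof -
    have "0 < inverse (real (Suc n))" by simp
    then have "g x < t + inverse (real (Suc n))" using le by linarith
    then show ?thesis unfolding f_def using assms gauge_less_imp_mem
      by (metis add_pos_pos inverse_positive_iff_positive of_nat_0_less_iff zero_less_Suc)
  qed
  moreover have "f \<longlonglongrightarrow> x /\<^sub>R (t + 0)" unfolding f_def using assms
    by (intro tendsto_intros LIMSEQ_inverse_real_of_nat) auto
  ultimately show "x /\<^sub>R t \<in> C" using closed_sequentially[OF compact_imp_closed[OF compact]] by auto
qed

lemma mem_iff_gauge_le_1: "x \<in> C \<longleftrightarrow> g x \<le> 1"
  using gauge_le_iff[of 1] by simp

lemma gauge_pos: assumes "x \<noteq> 0" shows "0 < g x"
proof -
  obtain R where R: "0 < R" "\<forall>x\<in>C. norm x \<le> R" by (rule obtain_norm_bound)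
  have "norm x / R \<le> g x" unfolding gauge_def
  proof (rule cInf_greatest)
    fix t assume t: "t \<in> {t. t \<ge> 0 \<and> x \<in> (\<lambda>v. t *\<^sub>R v) ` C}"
    then have "t > 0" using assms mem_zero_scaled_iff by force
    then have "norm (x /\<^sub>R t) \<le> R" using t mem_scaled_iff R(2) by auto
    with \<open>t > 0\<close> R show "norm x / R \<le> t" by (simp add: field_simps)
  qed (use gauge_set_nonempty in auto)
  then show ?thesis using assms R by (smt (verit) divide_pos_pos zero_less_norm_iff)
qed

lemma divide_gauge_mem: "x \<noteq> 0 \<Longrightarrow> x /\<^sub>R g x \<in> C"
  using gauge_le_iff[of "g x" x] gauge_pos by auto

lemma gauge_minus [simp]: "g (- x) = g x"
proof -
  have "g (- x) \<le> g x" for x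
  proof (cases "x = 0")
    case False
    then have "- (x /\<^sub>R g x) \<in> C" using divide_gauge_mem symmetric by blast
    then show ?thesis using gauge_le_iff[of "g x" "- x"] gauge_pos[OF False] by simp
  qed simp
  from this[of x] this[of "- x"] show ?thesis by simp
qed

lemma gauge_minus_commute: "g (x - y) = g (y - x)"
  by (metis gauge_minus minus_diff_eq)

lemma gauge_scaleR_pos: assumes "c > 0" shows "g (c *\<^sub>R x) = c * g x"
proof -
  have le: "g (c *\<^sub>R x) \<le> c * g x" if "c > 0" for c x
  proof (cases "x = 0")
    case False
    have eq: "(c *\<^sub>R x) /\<^sub>R (c * g x) = x /\<^sub>R g x" using that by simp
    have "g (c *\<^sub>R x) \<le> c * g x \<longleftrightarrow> (c *\<^sub>R x) /\<^sub>R (c * g x) \<in> C"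
      by (rule gauge_le_iff) (use that gauge_pos[OF False] in simp)
    then show ?thesis unfolding eq using divide_gauge_mem[OF False] by blast
  qed simp
  have "g x \<le> inverse c * g (c *\<^sub>R x)"
    using le[of "inverse c" "c *\<^sub>R x"] assms by simp
  then show ?thesis using le[OF assms, of x] assms by (simp add: field_simps)
qed

lemma gauge_scaleR: "g (c *\<^sub>R x) = \<bar>c\<bar> * g x"
proof -
  consider "c > 0" | "c = 0" | "c < 0" by linarith
  then show ?thesis
  proof cases
    case 3
    then show ?thesis using gauge_scaleR_pos[of "- c" x] gauge_minus[of "c *\<^sub>R x"] by simp
  qed (auto simp: gauge_scaleR_pos)
qed

lemma gauge_triangle: "g (x + y) \<le> g x + g y"
proof (cases "x = 0 \<or> y = 0")
  case True then show ?thesis by auto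
next
  case False
  then have pos: "g x > 0" "g y > 0" using gauge_pos by auto
  define s where "s = g x + g y"
  have s: "s > 0" using pos s_def by simp
  have "(g x / s) *\<^sub>R (x /\<^sub>R g x) + (g y / s) *\<^sub>R (y /\<^sub>R g y) \<in> C"
    using pos s s_def False divide_gauge_mem
    by (intro convexD[OF convex]) (auto simp: add_divide_distrib[symmetric])
  moreover have "(g x / s) *\<^sub>R (x /\<^sub>R g x) + (g y / s) *\<^sub>R (y /\<^sub>R g y) = (x + y) /\<^sub>R s"
    using pos s by (simp add: scaleR_add_right inverse_eq_divide)
  ultimately show ?thesis using gauge_le_iff[OF s] s_def by simp
qed

lemma gauge_diff_le_2: "x \<in> C \<Longrightarrow> y \<in> C \<Longrightarrow> g (x - y) \<le> 2"
  using gauge_triangle[of x "- y"] mem_iff_gauge_le_1 by simp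

lemma gauge_midpoint_le: "g ((1/2) *\<^sub>R (x + y)) \<le> (g x + g y) / 2"
  using gauge_scaleR_pos[of "1/2" "x + y"] gauge_triangle[of x y] by simp

lemma obtain_nonzero: obtains e :: 'a where "e \<noteq> 0"
  using nonzero_Basis SOME_Basis by blast

lemma exists_gauge_eq_1: "\<exists>e. g e = 1"
proof -
  obtain e :: 'a where "e \<noteq> 0" by (rule obtain_nonzero)
  then have "g (e /\<^sub>R g e) = 1" using gauge_pos[of e] gauge_scaleR_pos[of "inverse (g e)" e] by simp
  then show ?thesis by blast
qed

lemma gauge_eq_1_imp_frontier: assumes "g y = 1" shows "y \<in> frontier C"
proof -
  have "y \<notin> interior C"
  proof
    assume "y \<in> interior C"
    then obtain e where e: "e > 0" "ball y e \<subseteq> C" using mem_interior by blast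
    have y0: "y \<noteq> 0" using assms by auto
    define \<delta> where "\<delta> = e / (2 * norm y)"
    have \<delta>: "\<delta> > 0" using e y0 \<delta>_def by simp
    have "dist y ((1 + \<delta>) *\<^sub>R y) = \<delta> * norm y" using \<delta>
      by (simp add: dist_norm algebra_simps)
    also have "\<dots> < e" using e y0 \<delta>_def by simp
    finally have "g ((1 + \<delta>) *\<^sub>R y) \<le> 1" using e mem_iff_gauge_le_1 by auto
    moreover have "g ((1 + \<delta>) *\<^sub>R y) = 1 + \<delta>" using gauge_scaleR_pos[of "1 + \<delta>" y] \<delta> assms by simp
    ultimately show False using \<delta> by simp
  qed
  moreover have "y \<in> C" using assms mem_iff_gauge_le_1 by simp
  ultimately show ?thesis using closure_subset unfolding frontier_def by auto
qed

lemma inner_le_support: assumes "x \<in> C" shows "inner x d \<le> \<sigma> d"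
proof -
  obtain R where R: "0 < R" "\<forall>x\<in>C. norm x \<le> R" by (rule obtain_norm_bound)
  have "bdd_above ((\<lambda>v. inner v d) ` C)"
  proof (rule bdd_aboveI2)
    fix v assume "v \<in> C"
    then have "norm v * norm d \<le> R * norm d" using R by (simp add: mult_right_mono)
    then show "inner v d \<le> R * norm d" using norm_cauchy_schwarz[of v d] by linarith
  qed
  then show ?thesis unfolding support_fun_def using assms by (intro cSUP_upper)
qed

lemma support_le: "(\<And>x. x \<in> C \<Longrightarrow> inner x d \<le> a) \<Longrightarrow> \<sigma> d \<le> a"
  unfolding support_fun_def using zero_mem by (intro cSUP_least) auto

lemma support_attained: "\<exists>y\<in>C. inner y d = \<sigma> d"
proof -
  have "continuous_on C (\<lambda>v. inner v d)" by (intro continuous_intros)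
  then obtain y where y: "y \<in> C" "\<forall>z\<in>C. inner z d \<le> inner y d"
    using continuous_attains_sup[OF compact] zero_mem by blast
  then show ?thesis using support_le[of d "inner y d"] inner_le_support[of y d] by force
qed

lemma support_pos: assumes "d \<noteq> 0" shows "0 < \<sigma> d"
proof -
  obtain r where r: "0 < r" "cball 0 r \<subseteq> C" by (rule obtain_cball_subset)
  then have "(r / norm d) *\<^sub>R d \<in> C" using assms by (auto simp: subset_iff)
  from inner_le_support[OF this, of d] have "r * norm d \<le> \<sigma> d"
    using assms by (simp add: power2_norm_eq_inner[symmetric] power2_eq_square)
  moreover have "0 < r * norm d" using r assms by simp
  ultimately show ?thesis by linarith
qed

lemma support_zero [simp]: "\<sigma> 0 = 0"
  using support_le[of 0 0] inner_le_support[OF zero_mem, of 0] by simp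

lemma support_nonneg: "0 \<le> \<sigma> d"
  using support_pos[of d] by (cases "d = 0") auto

lemma support_le_norm: obtains R where "0 < R" "\<forall>d. \<sigma> d \<le> R * norm d"
proof -
  obtain R where R: "0 < R" "\<forall>x\<in>C. norm x \<le> R" by (rule obtain_norm_bound)
  have "\<sigma> d \<le> R * norm d" for d
  proof -
    obtain y where "y \<in> C" "inner y d = \<sigma> d" using support_attained by blast
    then show ?thesis using norm_cauchy_schwarz[of y d] R mult_right_mono[of "norm y" R "norm d"]
      by force
  qed
  then show ?thesis using that R by blast
qed

lemma support_scaleR_nonneg: assumes "c \<ge> 0" shows "\<sigma> (c *\<^sub>R d) = c * \<sigma> d"
proof -
  obtain y where y: "y \<in> C" "inner y d = \<sigma> d" using support_attained by blast
  obtain z where z: "z \<in> C" "inner z (c *\<^sub>R d) = \<sigma> (c *\<^sub>R d)" using support_attained by blast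
  have "\<sigma> (c *\<^sub>R d) = c * inner z d" using z by simp
  also have "\<dots> \<le> c * \<sigma> d" using inner_le_support[OF z(1), of d] assms by (rule mult_left_mono)
  finally have "\<sigma> (c *\<^sub>R d) \<le> c * \<sigma> d" .
  moreover have "c * \<sigma> d \<le> \<sigma> (c *\<^sub>R d)"
    using y inner_le_support[OF y(1), of "c *\<^sub>R d"] by simp
  ultimately show ?thesis by simp
qed

lemma support_add: "\<sigma> (a + b) \<le> \<sigma> a + \<sigma> b"
proof -
  obtain z where z: "z \<in> C" "inner z (a + b) = \<sigma> (a + b)" using support_attained by blast
  then show ?thesis using inner_le_support[OF z(1), of a] inner_le_support[OF z(1), of b]
    by (simp add: inner_add_right)
qed

lemma support_minus [simp]: "\<sigma> (- d) = \<sigma> d"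
proof -
  have "\<sigma> (- d) \<le> \<sigma> d" for d
  proof -
    obtain z where z: "z \<in> C" "inner z (- d) = \<sigma> (- d)" using support_attained by blast
    then show ?thesis using inner_le_support[OF symmetric[OF z(1)], of d] by simp
  qed
  from this[of d] this[of "- d"] show ?thesis by simp
qed

lemma support_minus_commute: "\<sigma> (a - b) = \<sigma> (b - a)"
  by (metis support_minus minus_diff_eq)

lemma support_scaleR: "\<sigma> (c *\<^sub>R d) = \<bar>c\<bar> * \<sigma> d"
  using support_scaleR_nonneg[of "\<bar>c\<bar>" d] support_minus[of "\<bar>c\<bar> *\<^sub>R d"]
  by (cases "c \<ge> 0") auto

lemma support_diff: "\<sigma> a - \<sigma> b \<le> \<sigma> (a - b)"
  using support_add[of "a - b" b] by simp

lemma inner_le_gauge_support: "inner x d \<le> g x * \<sigma> d"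
proof (cases "x = 0")
  case False
  have "inner (x /\<^sub>R g x) d \<le> \<sigma> d" using inner_le_support[OF divide_gauge_mem[OF False]] .
  then show ?thesis using gauge_pos[OF False] by (simp add: field_simps)
qed simp

lemma mem_polar_iff: "d \<in> polar C \<longleftrightarrow> \<sigma> d \<le> 1"
  unfolding polar_def using inner_le_support support_le by (auto intro: order_trans)

lemma gauge_polar_eq_support: "gauge (polar C) d = \<sigma> d"
proof (cases "d = 0")
  case True
  have "0 \<in> polar C" by (simp add: polar_def)
  then have "gauge (polar C) 0 \<le> 0" unfolding gauge_def
    by (intro cInf_lower bdd_belowI[of _ 0]) (auto intro!: image_eqI[of _ _ 0])
  moreover have "0 \<le> gauge (polar C) 0" unfolding gauge_def
    using \<open>0 \<in> polar C\<close> by (intro cInf_greatest) (auto intro!: exI[of _ 0] image_eqI[of _ _ 0])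
  ultimately show ?thesis using True by simp
next
  case False
  have "{t. 0 \<le> t \<and> d \<in> (\<lambda>v. t *\<^sub>R v) ` polar C} = {\<sigma> d..}"
  proof (intro set_eqI iffI)
    fix t assume "t \<in> {t. 0 \<le> t \<and> d \<in> (\<lambda>v. t *\<^sub>R v) ` polar C}"
    then obtain w where w: "t \<ge> 0" "w \<in> polar C" "d = t *\<^sub>R w" by auto
    then show "t \<in> {\<sigma> d..}"
      using mem_polar_iff support_scaleR_nonneg[of t w] by (auto simp: mult_left_le)
  next
    fix t assume t: "t \<in> {\<sigma> d..}"
    then have t0: "t > 0" using support_pos[OF False] by auto
    have "\<sigma> (d /\<^sub>R t) = \<sigma> d / t"
      using support_scaleR_nonneg[of "inverse t" d] t0 by (simp add: field_simps)
    then have "d /\<^sub>R t \<in> polar C" using mem_polar_iff t t0 by simp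
    then show "t \<in> {t. 0 \<le> t \<and> d \<in> (\<lambda>v. t *\<^sub>R v) ` polar C}"
      using t0 by (auto intro!: image_eqI[of d "(*\<^sub>R) t" "d /\<^sub>R t"])
  qed
  then show ?thesis unfolding gauge_def by simp
qed

lemma norming_direction: "\<exists>v. \<sigma> v = 1 \<and> inner w v = g w"
proof (cases "w = 0")
  case True
  obtain e :: 'a where e: "e \<noteq> 0" by (rule obtain_nonzero)
  have "\<sigma> (e /\<^sub>R \<sigma> e) = 1"
    using support_pos[OF e] support_scaleR_nonneg[of "inverse (\<sigma> e)" e] by simp
  then show ?thesis using True by auto
next
  case False
  define u where "u = w /\<^sub>R g w"
  have gw: "g w > 0" using gauge_pos[OF False] .
  have "g u = 1" unfolding u_def using gauge_scaleR_pos[of "inverse (g w)" w] gw by simp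
  then have u: "u \<in> frontier C" "u \<in> C"
    using gauge_eq_1_imp_frontier mem_iff_gauge_le_1 by auto
  then have "u \<notin> rel_interior C" "u \<in> closure C"
    using rel_interior_nonempty_interior[OF interior_nonempty] closure_subset
    unfolding frontier_def by auto
  then obtain a where a: "a \<noteq> 0" "\<And>y. y \<in> closure C \<Longrightarrow> inner a u \<le> inner a y"
    using supporting_hyperplane_relative_frontier[OF convex] by metis
  define d where "d = - a"
  have "\<sigma> d \<le> inner u d"
    using a(2) closure_subset unfolding d_def by (intro support_le) (auto simp: inner_commute)
  then have ud: "inner u d = \<sigma> d" using inner_le_support[OF u(2), of d] by simp
  have sd: "\<sigma> d > 0" using support_pos a(1) unfolding d_def by simp
  define v where "v = d /\<^sub>R \<sigma> d"
  have "\<sigma> v = 1" unfolding v_def using support_scaleR_nonneg[of "inverse (\<sigma> d)" d] sd by simp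
  moreover have "inner w v = g w"
  proof -
    have "w = g w *\<^sub>R u" unfolding u_def using gw by simp
    then have "inner w v = g w * inner u v" by (metis inner_scaleR_left)
    also have "inner u v = 1" unfolding v_def using ud sd by simp
    finally show ?thesis by simp
  qed
  ultimately show ?thesis by blast
qed

lemma maximizer_gauge_eq_1:
  assumes "d \<noteq> 0" "y \<in> C" "inner y d = \<sigma> d" shows "g y = 1"
proof -
  have "\<sigma> d \<le> g y * \<sigma> d" using inner_le_gauge_support[of y d] assms by simp
  then show ?thesis using support_pos[OF assms(1)] assms(2) mem_iff_gauge_le_1 by simp
qed

lemma gauge_diff_le_via_normalized:
  assumes "x \<noteq> 0" shows "g (x - z) \<le> \<bar>g x - 1\<bar> + g (x /\<^sub>R g x - z)"
proof -
  have "x - x /\<^sub>R g x = (g x - 1) *\<^sub>R (x /\<^sub>R g x)"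
    using gauge_pos[OF assms] by (simp add: algebra_simps)
  moreover have "g (x /\<^sub>R g x) = 1"
    using gauge_pos[OF assms] gauge_scaleR_pos[of "inverse (g x)" x] by simp
  ultimately have "g (x - x /\<^sub>R g x) = \<bar>g x - 1\<bar>" by (simp only: gauge_scaleR mult_1_right)
  then show ?thesis using gauge_triangle[of "x - x /\<^sub>R g x" "x /\<^sub>R g x - z"] by simp
qed

lemma gauge_diff_powr_near_origin:
  assumes "g z = 1" "g x < 1/2" "0 \<le> p"
  shows "g (x - z) powr p \<le> 3 powr p * \<bar>g x - 1\<bar> powr p"
proof -
  have "g (x - z) \<le> 3 * \<bar>g x - 1\<bar>" using gauge_triangle[of x "- z"] assms by simp
  then show ?thesis using assms gauge_nonneg by (simp add: powr_mono2 powr_mult[symmetric])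
qed

lemma powr_gauge_divide:
  assumes "\<rho> > 0" shows "\<rho> powr p * g (w /\<^sub>R \<rho>) powr p = g w powr p"
proof -
  have "\<rho> * g (w /\<^sub>R \<rho>) = g w" using assms gauge_scaleR_pos[of "inverse \<rho>" w] by simp
  then show ?thesis using powr_mult[of \<rho> "g (w /\<^sub>R \<rho>)" p] assms gauge_nonneg[of "w /\<^sub>R \<rho>"] by simp
qed

lemma shifted_ball_subset_iff:
  assumes "\<rho> \<ge> 0" shows "{m + \<rho> *\<^sub>R b | b. g b \<le> 1} \<subseteq> C \<longleftrightarrow> g m + \<rho> \<le> 1"
proof
  assume le: "g m + \<rho> \<le> 1"
  show "{m + \<rho> *\<^sub>R b | b. g b \<le> 1} \<subseteq> C"
  proof clarify
    fix b assume b: "g b \<le> 1"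
    have "g (m + \<rho> *\<^sub>R b) \<le> g m + \<rho> * g b"
      using gauge_triangle[of m "\<rho> *\<^sub>R b"] gauge_scaleR[of \<rho> b] assms by simp
    also have "\<dots> \<le> g m + \<rho>" using b assms by (simp add: mult_left_le)
    finally show "m + \<rho> *\<^sub>R b \<in> C" using le mem_iff_gauge_le_1 by simp
  qed
next
  assume inC: "{m + \<rho> *\<^sub>R b | b. g b \<le> 1} \<subseteq> C"
  obtain u where u: "g u = 1" "m = g m *\<^sub>R u"
  proof (cases "m = 0")
    case True
    obtain e where "g e = 1" using exists_gauge_eq_1 by blast
    then show ?thesis using that[of e] True by simp
  next
    case False
    then have "g (m /\<^sub>R g m) = 1" "m = g m *\<^sub>R (m /\<^sub>R g m)"
      using gauge_pos[of m] gauge_scaleR_pos[of "inverse (g m)" m] by simp_all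
    then show ?thesis by (rule that)
  qed
  have "m + \<rho> *\<^sub>R u = (g m + \<rho>) *\<^sub>R u"
    by (subst u(2)) (simp add: algebra_simps)
  moreover have "m + \<rho> *\<^sub>R u \<in> C" using inC u(1) by fastforce
  ultimately have "g ((g m + \<rho>) *\<^sub>R u) \<le> 1" using mem_iff_gauge_le_1 by simp
  then show "g m + \<rho> \<le> 1"
    using u(1) gauge_scaleR[of "g m + \<rho>" u] gauge_nonneg[of m] assms by simp
qed

lemma set_mid_convex_iff_gauge_mid_convex: "set_mid_convex C p \<longleftrightarrow> gauge_mid_convex C p"
proof -
  have "{(1/2) *\<^sub>R (x + y) + (\<alpha> * g (x - y) powr p) *\<^sub>R b | b. g b \<le> 1} \<subseteq> C
      \<longleftrightarrow> g ((1/2) *\<^sub>R (x + y)) + \<alpha> * g (x - y) powr p \<le> 1" if "\<alpha> > 0" for \<alpha> x y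
    using that by (intro shifted_ball_subset_iff) simp
  then show ?thesis unfolding set_mid_convex_def gauge_mid_convex_def by (simp cong: conj_cong)
qed

lemma gauge_mid_convex_imp_scaling_inequality:
  assumes "gauge_mid_convex C p" shows "scaling_inequality C p"
proof -
  obtain \<alpha> where \<alpha>: "\<alpha> > 0" and mid: "\<And>x y. x \<in> C \<Longrightarrow> y \<in> C \<Longrightarrow>
     g ((1/2) *\<^sub>R (x + y)) + \<alpha> * g (x - y) powr p \<le> 1"
    using assms unfolding gauge_mid_convex_def by blast
  have "2 * \<alpha> * gauge (polar C) d * g (y - x) powr p \<le> inner d (y - x)"
    if x: "x \<in> C" and y: "y \<in> frontier C" and d: "d \<in> normal_cone C y" for x y d
  proof -
    have yC: "y \<in> C" using y compact compact_imp_closed frontier_subset_closed by blast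
    obtain b where b: "b \<in> C" "inner b d = \<sigma> d" using support_attained by blast
    define m where "m = (1/2) *\<^sub>R (x + y)"
    define \<rho> where "\<rho> = \<alpha> * g (x - y) powr p"
    have \<rho>: "\<rho> \<ge> 0" using \<alpha> \<rho>_def by simp
    have "{m + \<rho> *\<^sub>R b | b. g b \<le> 1} \<subseteq> C"
      using shifted_ball_subset_iff[OF \<rho>] mid[OF x yC] unfolding m_def \<rho>_def by simp
    moreover have "g b \<le> 1" using b(1) mem_iff_gauge_le_1 by simp
    ultimately have "m + \<rho> *\<^sub>R b \<in> C" by blast
    then have "inner d (m + \<rho> *\<^sub>R b - y) \<le> 0" using d unfolding normal_cone_def by blast
    then have "(inner d x + inner d y) / 2 + \<rho> * \<sigma> d \<le> inner d y" using b
      by (simp add: m_def inner_diff_right inner_add_right inner_commute)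
    then have "2 * (\<rho> * \<sigma> d) \<le> inner d (y - x)" unfolding inner_diff_right by argo
    then show ?thesis
      using gauge_polar_eq_support gauge_minus_commute[of x y] \<rho>_def
      by (simp add: inner_diff_right mult_ac)
  qed
  then show ?thesis unfolding scaling_inequality_def using \<alpha> by (intro exI[of _ "2 * \<alpha>"]) auto
qed

lemma unit_normal_cone: assumes "\<sigma> d = 1" "inner y d = 1" shows "d \<in> normal_cone C y"
proof -
  have "inner d (x - y) \<le> 0" if "x \<in> C" for x
    using inner_le_support[OF that, of d] assms by (simp add: inner_diff_right inner_commute)
  then show ?thesis by (simp add: normal_cone_def)
qed

lemma scaling_inequality_imp_sphere_scaling:
  assumes "scaling_inequality C p" shows "sphere_scaling_inequality C p"
proof -
  obtain \<alpha> where \<alpha>: "\<alpha> > 0" and scaling: "\<And>x y d. x \<in> C \<Longrightarrow> y \<in> frontier C \<Longrightarrow>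
      d \<in> normal_cone C y \<Longrightarrow> \<alpha> * gauge (polar C) d * g (y - x) powr p \<le> inner d (y - x)"
    using assms unfolding scaling_inequality_def by blast
  have "\<alpha> * g (y - x) powr p \<le> inner d (y - x)"
    if "g x = 1" "g y = 1" "\<sigma> d = 1" "inner y d = 1" for x y d
    using scaling[of x y d] that mem_iff_gauge_le_1 gauge_eq_1_imp_frontier unit_normal_cone
      gauge_polar_eq_support by simp
  then show ?thesis unfolding sphere_scaling_inequality_def using \<alpha> by blast
qed

lemma modulus_convexity_le:
  assumes "g x = 1" "g y = 1" "\<epsilon> \<le> g (x - y)"
  shows "modulus_convexity C \<epsilon> \<le> 1 - g ((1/2) *\<^sub>R (x + y))"
  unfolding modulus_convexity_def
proof (rule cInf_lower)
  show "bdd_below {1 - g ((1/2) *\<^sub>R (x + y)) | x y. g x = 1 \<and> g y = 1 \<and> g (x - y) \<ge> \<epsilon>}"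
  proof (rule bdd_belowI[of _ 0], clarify)
    fix x y assume "g x = 1" "g y = 1"
    then show "0 \<le> 1 - g ((1/2) *\<^sub>R (x + y))" using gauge_midpoint_le[of x y] by simp
  qed
qed (use assms in blast)

lemma gauge_mid_convex_imp_modulus_bound:
  assumes "gauge_mid_convex C p" "0 \<le> p" shows "modulus_convexity_power_bound C p"
proof -
  obtain \<alpha> where \<alpha>: "\<alpha> > 0" and mid: "\<And>x y. x \<in> C \<Longrightarrow> y \<in> C \<Longrightarrow>
     g ((1/2) *\<^sub>R (x + y)) + \<alpha> * g (x - y) powr p \<le> 1"
    using assms unfolding gauge_mid_convex_def by blast
  have "\<alpha> * \<epsilon> powr p \<le> modulus_convexity C \<epsilon>" if \<epsilon>: "\<epsilon> \<in> {0..2}" for \<epsilon>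
    unfolding modulus_convexity_def
  proof (rule cInf_greatest)
    obtain u where u: "g u = 1" using exists_gauge_eq_1 by blast
    then have "g (u - - u) = 2" using gauge_scaleR_pos[of 2 u] by (simp add: scaleR_2)
    then show "{1 - g ((1/2) *\<^sub>R (x + y)) | x y. g x = 1 \<and> g y = 1 \<and> g (x - y) \<ge> \<epsilon>} \<noteq> {}"
      using u \<epsilon> by (intro ex_in_conv[THEN iffD1] exI[of _ "1 - g ((1/2) *\<^sub>R (u + - u))"]) fastforce
  next
    fix t assume "t \<in> {1 - g ((1/2) *\<^sub>R (x + y)) | x y. g x = 1 \<and> g y = 1 \<and> g (x - y) \<ge> \<epsilon>}"
    then obtain x y where xy: "t = 1 - g ((1/2) *\<^sub>R (x + y))" "g x = 1" "g y = 1" "\<epsilon> \<le> g (x - y)"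
      by blast
    have "\<alpha> * \<epsilon> powr p \<le> \<alpha> * g (x - y) powr p"
      using \<epsilon> xy assms(2) \<alpha> by (simp add: powr_mono2)
    also have "\<dots> \<le> t" using mid[of x y] xy mem_iff_gauge_le_1 by simp
    finally show "\<alpha> * \<epsilon> powr p \<le> t" .
  qed
  then show ?thesis unfolding modulus_convexity_power_bound_def using \<alpha> by blast
qed

lemma modulus_bound_imp_sphere_scaling:
  assumes "modulus_convexity_power_bound C p" shows "sphere_scaling_inequality C p"
proof -
  obtain \<alpha> where \<alpha>: "\<alpha> > 0" and modulus: "\<And>\<epsilon>. \<epsilon> \<in> {0..2} \<Longrightarrow> \<alpha> * \<epsilon> powr p \<le> modulus_convexity C \<epsilon>"
    using assms unfolding modulus_convexity_power_bound_def by blast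
  have "2 * \<alpha> * g (y - x) powr p \<le> inner d (y - x)"
    if xy: "g x = 1" "g y = 1" "\<sigma> d = 1" "inner y d = 1" for x y d
  proof -
    have "g (x - y) \<in> {0..2}"
      using gauge_nonneg gauge_diff_le_2 xy mem_iff_gauge_le_1 by auto
    then have "\<alpha> * g (x - y) powr p \<le> 1 - g ((1/2) *\<^sub>R (x + y))"
      using modulus modulus_convexity_le[OF xy(1,2) order_refl] by (meson order_trans)
    moreover have "inner ((1/2) *\<^sub>R (x + y)) d \<le> g ((1/2) *\<^sub>R (x + y))"
      using inner_le_gauge_support[of "(1/2) *\<^sub>R (x + y)" d] xy(3) by (simp only: mult_1_right)
    ultimately show ?thesis using xy gauge_minus_commute[of x y]
      by (simp add: inner_add_left inner_add_right inner_diff_right inner_commute)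
  qed
  then show ?thesis unfolding sphere_scaling_inequality_def using \<alpha> by (intro exI[of _ "2 * \<alpha>"]) auto
qed

lemma gauge_uniformly_convex_imp_gauge_mid_convex:
  assumes "gauge_uniformly_convex C p" "1 \<le> p" shows "gauge_mid_convex C p"
proof -
  obtain \<alpha> where \<alpha>: "\<alpha> > 0" and ucvx: "\<And>x y l. l \<in> {0..1} \<Longrightarrow>
      g (l *\<^sub>R x + (1 - l) *\<^sub>R y) powr p + \<alpha> / p * l * (1 - l) * g (x - y) powr p
      \<le> l * g x powr p + (1 - l) * g y powr p"
    using assms unfolding gauge_uniformly_convex_def by blast
  have "g ((1/2) *\<^sub>R (x + y)) + \<alpha> / (4 * p * p) * g (x - y) powr p \<le> 1"
    if xy: "x \<in> C" "y \<in> C" for x y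
  proof -
    define m where "m = (1/2) *\<^sub>R (x + y)"
    have "g m powr p + \<alpha> / p * (1/2) * (1 - 1/2) * g (x - y) powr p
        \<le> (1/2) * g x powr p + (1 - 1/2) * g y powr p"
      using ucvx[of "1/2" x y] by (simp add: m_def scaleR_add_right)
    moreover have "g x powr p \<le> 1" "g y powr p \<le> 1"
      using xy mem_iff_gauge_le_1 gauge_nonneg assms(2) by (auto intro: powr_le1)
    moreover have "1 + p * (g m - 1) \<le> g m powr p"
      using powr_above_tangent[of p "g m" 1] assms(2) gauge_nonneg by simp
    ultimately have "\<alpha> / (4 * p) * g (x - y) powr p \<le> p * (1 - g m)"
      by (simp add: algebra_simps)
    then show ?thesis using assms(2) unfolding m_def[symmetric] by (simp add: field_simps)
  qed
  then show ?thesis unfolding gauge_mid_convex_def using \<alpha> assms(2)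
    by (intro exI[of _ "\<alpha> / (4 * p * p)"]) auto
qed

definition dual_direction :: "'a \<Rightarrow> 'a" where
  "dual_direction z = (SOME v. \<sigma> v = 1 \<and> inner z v = g z)"

lemma dual_direction: "\<sigma> (dual_direction z) = 1" "inner z (dual_direction z) = g z"
  using someI_ex[OF norming_direction[of z]] unfolding dual_direction_def by auto

definition maximizer :: "'a \<Rightarrow> 'a" where
  "maximizer d = (SOME y. y \<in> C \<and> inner y d = \<sigma> d)"

lemma maximizer: "maximizer d \<in> C" "inner (maximizer d) d = \<sigma> d"
  using someI_ex[OF support_attained[of d, unfolded Bex_def]] unfolding maximizer_def by auto

lemma support_above_tangent: "\<sigma> a + inner (maximizer a) (z - a) \<le> \<sigma> z"
  using inner_le_support[OF maximizer(1)[of a], of z] maximizer(2)[of a]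
  by (simp add: inner_diff_right)

definition support_powr_grad :: "real \<Rightarrow> 'a \<Rightarrow> 'a" where
  "support_powr_grad q d = (q * \<sigma> d powr (q - 1)) *\<^sub>R maximizer d"

lemma support_powr_above_tangent:
  assumes "1 \<le> q"
  shows "\<sigma> a powr q + inner (support_powr_grad q a) (z - a) \<le> \<sigma> z powr q"
proof -
  have "q * \<sigma> a powr (q - 1) * inner (maximizer a) (z - a) \<le> q * \<sigma> a powr (q - 1) * (\<sigma> z - \<sigma> a)"
    using support_above_tangent[of a z] assms by (intro mult_left_mono) auto
  moreover have "\<sigma> a powr q + q * \<sigma> a powr (q - 1) * (\<sigma> z - \<sigma> a) \<le> \<sigma> z powr q"
    using powr_above_tangent[of q "\<sigma> z" "\<sigma> a"] assms support_nonneg by simp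
  ultimately show ?thesis unfolding support_powr_grad_def by simp
qed

lemma support_powr_grad_diff_le:
  assumes "1 \<le> q" "\<sigma> b \<le> \<sigma> a"
  shows "g (support_powr_grad q a - support_powr_grad q b) \<le> q * (\<sigma> a powr (q - 1) * g (maximizer a - maximizer b)
    + (\<sigma> a powr (q - 1) - \<sigma> b powr (q - 1)) * g (maximizer b))"
proof -
  define A B where "A = \<sigma> a powr (q - 1)" and "B = \<sigma> b powr (q - 1)"
  have AB: "0 \<le> A" "B \<le> A" unfolding A_def B_def using assms support_nonneg by (auto intro: powr_mono2)
  have "support_powr_grad q a - support_powr_grad q b
      = q *\<^sub>R (A *\<^sub>R (maximizer a - maximizer b) + (A - B) *\<^sub>R maximizer b)"
    unfolding support_powr_grad_def A_def B_def by (simp add: algebra_simps)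
  then show ?thesis
    using assms AB gauge_triangle[of "A *\<^sub>R (maximizer a - maximizer b)" "(A - B) *\<^sub>R maximizer b"]
    unfolding A_def[symmetric] B_def[symmetric] by (simp add: gauge_scaleR)
qed

lemma support_powr_diff_le:
  assumes "0 < k" "k \<le> 1" "\<sigma> b \<le> \<sigma> a"
  shows "\<sigma> a powr k - \<sigma> b powr k \<le> \<sigma> (a - b) powr k"
proof -
  have "\<sigma> a powr k - \<sigma> b powr k \<le> (\<sigma> a - \<sigma> b) powr k"
    using assms support_nonneg by (intro powr_diff_le_diff_powr) auto
  also have "\<dots> \<le> \<sigma> (a - b) powr k" using support_diff[of a b] assms by (intro powr_mono2) auto
  finally show ?thesis .
qed

lemma sphere_scaling_of_tradeoff:
  assumes "1 < p" "1 < q" "(p - 1) * (q - 1) = 1" "K > 0"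
    and tradeoff: "\<And>x y d t. g x = 1 \<Longrightarrow> g y = 1 \<Longrightarrow> \<sigma> d = 1 \<Longrightarrow> inner y d = 1 \<Longrightarrow> t > 0 \<Longrightarrow>
      t * g (x - y) - K * t powr q \<le> inner d (y - x)"
  shows "sphere_scaling_inequality C p"
proof -
  have "g (y - x) powr p / (2 * (2 * K) powr (p - 1)) \<le> inner d (y - x)"
    if xy: "g x = 1" "g y = 1" "\<sigma> d = 1" "inner y d = 1" for x y d
  proof -
    have "0 \<le> inner d (y - x)"
      using inner_le_support[of x d] xy mem_iff_gauge_le_1 by (simp add: inner_diff_right inner_commute)
    then show ?thesis
      using powr_conjugate_lower_bound[OF assms(3,1,2) gauge_nonneg assms(4)] tradeoff[OF xy]
        gauge_minus_commute[of x y] by simp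
  qed
  then show ?thesis unfolding sphere_scaling_inequality_def using assms
    by (intro exI[of _ "1 / (2 * (2 * K) powr (p - 1))"]) auto
qed

lemma tilted_maximizer_gap:
  assumes "x \<in> C" "y' \<in> C" "inner y' (d + t *\<^sub>R v) = \<sigma> (d + t *\<^sub>R v)"
    and "\<sigma> v = 1" "inner y d = \<sigma> d" "t \<ge> 0"
  shows "t * inner (x - y) v - t * g (y' - y) \<le> inner d (y - x)"
proof -
  have "inner x d + t * inner x v \<le> inner y' d + t * inner y' v"
    using inner_le_support[OF assms(1), of "d + t *\<^sub>R v"] assms(3) by (simp add: inner_add_right)
  moreover have "inner y' d \<le> inner y d" using inner_le_support[OF assms(2), of d] assms(5) by simp
  moreover have "t * inner (y' - y) v \<le> t * g (y' - y)"
    using inner_le_gauge_support[of "y' - y" v] assms(4,6) by (simp add: mult_left_mono)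
  ultimately show ?thesis by (simp add: inner_diff_left inner_diff_right inner_commute algebra_simps)
qed

lemma grad_support_eq_maximizer:
  assumes "\<sigma> differentiable (at e)" "y \<in> C" "inner y e = \<sigma> e"
  shows "grad \<sigma> e = y"
proof -
  obtain f' where f': "(\<sigma> has_derivative f') (at e)" using assms(1) unfolding differentiable_def by blast
  moreover have "\<sigma> e + inner y (z - e) \<le> \<sigma> z" for z
    using inner_le_support[OF assms(2), of z] assms(3) by (simp add: inner_diff_right)
  ultimately have "f' = inner y" by (rule derivative_eq_subgradient)
  then show ?thesis using grad_eqI f' by blast
qed

lemma normalized_tilt_close:
  assumes "\<sigma> d = 1" "\<sigma> v = 1" "0 < t" "t \<le> 1/2"
  shows "1/2 \<le> \<sigma> (d + t *\<^sub>R v)"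
    and "\<sigma> ((d + t *\<^sub>R v) /\<^sub>R \<sigma> (d + t *\<^sub>R v) - d) \<le> 2 * t"
proof -
  define s where "s = \<sigma> (d + t *\<^sub>R v)"
  have tv: "\<sigma> (t *\<^sub>R v) = t" using support_scaleR_nonneg[of t v] assms by simp
  have "\<bar>s - 1\<bar> \<le> t"
    using support_diff[of "d + t *\<^sub>R v" d] support_diff[of d "d + t *\<^sub>R v"]
      support_minus_commute[of d "d + t *\<^sub>R v"] assms tv unfolding s_def by simp
  then show s: "1/2 \<le> s" using assms by simp
  have "(d + t *\<^sub>R v) /\<^sub>R s - d = (inverse s - 1) *\<^sub>R (d + t *\<^sub>R v) + t *\<^sub>R v"
    by (simp add: algebra_simps)
  then have "\<sigma> ((d + t *\<^sub>R v) /\<^sub>R s - d) \<le> \<bar>inverse s - 1\<bar> * s + t"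
    using support_add[of "(inverse s - 1) *\<^sub>R (d + t *\<^sub>R v)" "t *\<^sub>R v"] tv
    by (simp add: support_scaleR s_def)
  also have "\<bar>inverse s - 1\<bar> * s = \<bar>1 - s\<bar>" using s by (simp add: abs_mult[symmetric] field_simps)
  finally show "\<sigma> ((d + t *\<^sub>R v) /\<^sub>R s - d) \<le> 2 * t" using \<open>\<bar>s - 1\<bar> \<le> t\<close> by simp
qed

end

section \<open>Consequences of the sphere scaling inequality\<close>

locale sphere_scaling_body = symmetric_convex_body +
  fixes \<alpha> p :: real
  assumes \<alpha>: "\<alpha> > 0"
    and scaling: "\<And>x y d. g x = 1 \<Longrightarrow> g y = 1 \<Longrightarrow> \<sigma> d = 1 \<Longrightarrow> inner y d = 1 \<Longrightarrow>
      \<alpha> * g (y - x) powr p \<le> inner d (y - x)"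
begin

lemma scaling_normalized:
  assumes z: "g z = 1" and v: "\<sigma> v = 1" "inner z v = 1" and x: "1/2 \<le> g x"
  shows "\<alpha> / 2 * g (x /\<^sub>R g x - z) powr p \<le> g x - inner x v"
proof -
  define r where "r = g x"
  have r: "r > 0" using x r_def by simp
  have "g (x /\<^sub>R r) = 1" unfolding r_def
    using gauge_scaleR_pos[of "inverse (g x)" x] x by simp
  then have "\<alpha> * g (z - x /\<^sub>R r) powr p \<le> inner v (z - x /\<^sub>R r)"
    using scaling[OF _ z v] by blast
  also have "\<dots> = 1 - inner x v / r"
    using v by (simp add: inner_diff_right inner_commute divide_inverse mult.commute)
  finally have "r * (\<alpha> * g (x /\<^sub>R r - z) powr p) \<le> r * (1 - inner x v / r)"
    using r gauge_minus_commute[of z] by (simp add: mult_left_mono)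
  also have "\<dots> = r - inner x v" using r by (simp add: field_simps)
  finally have "r * (\<alpha> * g (x /\<^sub>R r - z) powr p) \<le> r - inner x v" .
  moreover have "1/2 * (\<alpha> * g (x /\<^sub>R r - z) powr p) \<le> r * (\<alpha> * g (x /\<^sub>R r - z) powr p)"
    using x \<alpha> r_def by (intro mult_right_mono) auto
  ultimately show ?thesis unfolding r_def by simp
qed

lemma gauge_diff_powr_away_from_origin:
  assumes "0 < p" and z: "g z = 1" and v: "\<sigma> v = 1" "inner z v = 1" and x: "1/2 \<le> g x"
  shows "g (x - z) powr p \<le> 2 powr p * (\<bar>g x - 1\<bar> powr p + 2 / \<alpha> * (g x - inner x v))"
proof -
  define b where "b = g (x /\<^sub>R g x - z)"
  have "x \<noteq> 0" using x by auto
  then have "g (x - z) powr p \<le> (\<bar>g x - 1\<bar> + b) powr p"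
    using gauge_diff_le_via_normalized[of x z] gauge_nonneg assms
    unfolding b_def by (intro powr_mono2) auto
  also have "\<dots> \<le> 2 powr p * (\<bar>g x - 1\<bar> powr p + b powr p)"
    using assms gauge_nonneg b_def by (intro powr_add_le_two_powr) auto
  also have "b powr p \<le> 2 / \<alpha> * (g x - inner x v)"
    using scaling_normalized[OF z v x] \<alpha> unfolding b_def by (simp add: field_simps)
  finally show ?thesis by simp
qed

lemma gauge_powr_lower_bound_normalized:
  assumes "2 \<le> p" and z: "g z = 1" and v: "\<sigma> v = 1" "inner z v = 1"
  shows "min (\<alpha>/2) 1 / 3 powr p * g (x - z) powr p \<le> g x powr p - 1 - p * (inner x v - 1)"
proof -
  define m r where "m = min (\<alpha>/2) 1" and "r = g x"
  have m: "0 < m" "m \<le> 1" "m * (2 / \<alpha>) \<le> 1" unfolding m_def using \<alpha> by (auto simp: field_simps)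
  have xv: "inner x v \<le> r" using inner_le_gauge_support[of x v] v r_def by simp
  have "m / 3 powr p * g (x - z) powr p \<le> \<bar>r - 1\<bar> powr p + (r - inner x v)"
  proof (cases "r < 1/2")
    case True
    then have "m / 3 powr p * g (x - z) powr p \<le> m / 3 powr p * (3 powr p * \<bar>r - 1\<bar> powr p)"
      using gauge_diff_powr_near_origin[OF z] m assms unfolding r_def by (intro mult_left_mono) auto
    also have "\<dots> \<le> \<bar>r - 1\<bar> powr p" using m by (simp add: mult_left_le_one_le)
    finally show ?thesis using xv by simp
  next
    case False
    then have "m / 3 powr p * g (x - z) powr p
        \<le> m / 3 powr p * (2 powr p * (\<bar>r - 1\<bar> powr p + 2 / \<alpha> * (r - inner x v)))"
      using gauge_diff_powr_away_from_origin[OF _ z v] m assms unfolding r_def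
      by (intro mult_left_mono) auto
    also have "\<dots> \<le> m * (\<bar>r - 1\<bar> powr p + 2 / \<alpha> * (r - inner x v))"
    proof -
      have "2 powr p / 3 powr p \<le> 1" using assms by (simp add: powr_mono2)
      moreover have "0 \<le> m * (\<bar>r - 1\<bar> powr p + 2 / \<alpha> * (r - inner x v))" using m \<alpha> xv by simp
      ultimately have "m * (\<bar>r - 1\<bar> powr p + 2 / \<alpha> * (r - inner x v)) * (2 powr p / 3 powr p)
          \<le> m * (\<bar>r - 1\<bar> powr p + 2 / \<alpha> * (r - inner x v))"
        by (rule mult_left_le)
      then show ?thesis by (simp add: mult_ac)
    qed
    also have "\<dots> \<le> \<bar>r - 1\<bar> powr p + (r - inner x v)"
    proof -
      have "m * \<bar>r - 1\<bar> powr p \<le> \<bar>r - 1\<bar> powr p" using m by (simp add: mult_left_le_one_le)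
      moreover have "(m * (2 / \<alpha>)) * (r - inner x v) \<le> 1 * (r - inner x v)"
        using m xv by (intro mult_right_mono) auto
      ultimately show ?thesis unfolding distrib_left by (simp add: mult.assoc)
    qed
    finally show ?thesis .
  qed
  also have "\<dots> \<le> r powr p - 1 - p * (inner x v - 1)"
  proof -
    have "r - inner x v \<le> p * (r - inner x v)" using xv assms by (simp add: mult_le_cancel_right1)
    then show ?thesis using powr_ge_tangent_at_one_plus_powr[OF assms(1) gauge_nonneg[of x]]
      unfolding r_def by (simp add: algebra_simps)
  qed
  finally show ?thesis unfolding m_def r_def .
qed

lemma gauge_powr_lower_bound:
  assumes "2 \<le> p"
  shows "g z powr p + p * g z powr (p - 1) * inner (dual_direction z) (x - z)
    + min (\<alpha>/2) 1 / 3 powr p * g (x - z) powr p \<le> g x powr p"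
proof -
  define \<beta> where "\<beta> = min (\<alpha>/2) 1 / 3 powr p"
  show ?thesis
  proof (cases "z = 0")
    case True
    have "0 \<le> \<beta>" "\<beta> \<le> 1"
      using assms ge_one_powr_ge_zero[of 3 p] \<alpha> unfolding \<beta>_def
      by (simp_all add: divide_le_eq_1 min_le_iff_disj)
    then have "\<beta> * g x powr p \<le> g x powr p" by (intro mult_left_le_one_le) auto
    then show ?thesis using True assms unfolding \<beta>_def by simp
  next
    case False
    define \<rho> v where "\<rho> = g z" and "v = dual_direction z"
    have \<rho>: "\<rho> > 0" unfolding \<rho>_def using gauge_pos[OF False] .
    have "g (z /\<^sub>R \<rho>) = 1" "\<sigma> v = 1" "inner (z /\<^sub>R \<rho>) v = 1"
      using gauge_scaleR_pos[of "inverse \<rho>" z] dual_direction[of z] \<rho> unfolding \<rho>_def v_def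
      by simp_all
    from gauge_powr_lower_bound_normalized[OF assms this, of "x /\<^sub>R \<rho>"]
    have "\<rho> powr p * (\<beta> * g (x /\<^sub>R \<rho> - z /\<^sub>R \<rho>) powr p)
        \<le> \<rho> powr p * (g (x /\<^sub>R \<rho>) powr p - 1 - p * (inner (x /\<^sub>R \<rho>) v - 1))"
      unfolding \<beta>_def by (rule mult_left_mono) simp
    moreover have "x /\<^sub>R \<rho> - z /\<^sub>R \<rho> = (x - z) /\<^sub>R \<rho>"
      by (simp add: scaleR_diff_right)
    then have "\<rho> powr p * (\<beta> * g (x /\<^sub>R \<rho> - z /\<^sub>R \<rho>) powr p) = \<beta> * g (x - z) powr p"
      by (metis mult.left_commute powr_gauge_divide[OF \<rho>])
    moreover have "\<rho> powr p * (g (x /\<^sub>R \<rho>) powr p - 1 - p * (inner (x /\<^sub>R \<rho>) v - 1))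
        = g x powr p - \<rho> powr p - p * (\<rho> powr p * (inner (x /\<^sub>R \<rho>) v - 1))"
      using powr_gauge_divide[OF \<rho>, of p x] by (simp add: algebra_simps)
    moreover have "\<rho> powr p * (inner (x /\<^sub>R \<rho>) v - 1) = \<rho> powr (p - 1) * inner v (x - z)"
      using \<rho> powr_mult_base[of \<rho> "p - 1"] dual_direction(2)[of z]
      unfolding \<rho>_def[symmetric] v_def[symmetric]
      by (simp add: inner_diff_right inner_commute field_simps)
    ultimately have "\<beta> * g (x - z) powr p
        \<le> g x powr p - \<rho> powr p - p * (\<rho> powr (p - 1) * inner v (x - z))"
      by (simp only:)
    then show ?thesis unfolding \<beta>_def \<rho>_def v_def by (simp add: mult_ac)
  qed
qed

lemma scaling_at_maximizer:
  assumes "d \<noteq> 0" "y \<in> C" "inner y d = \<sigma> d" "g y' = 1"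
  shows "\<alpha> * \<sigma> d * g (y - y') powr p \<le> inner d (y - y')"
proof -
  have \<sigma>: "\<sigma> d > 0" using support_pos[OF assms(1)] .
  define e where "e = d /\<^sub>R \<sigma> d"
  have "\<sigma> e = 1" unfolding e_def using support_scaleR_nonneg[of "inverse (\<sigma> d)" d] \<sigma> by simp
  moreover have "inner y e = 1" unfolding e_def using assms(3) \<sigma> by simp
  ultimately have "\<alpha> * g (y - y') powr p \<le> inner e (y - y')"
    using scaling[OF assms(4) maximizer_gauge_eq_1[OF assms(1-3)]] by blast
  then have "\<sigma> d * (\<alpha> * g (y - y') powr p) \<le> \<sigma> d * inner e (y - y')" using \<sigma> by simp
  moreover have "\<sigma> d * inner e (y - y') = inner d (y - y')" unfolding e_def using \<sigma> by simp
  ultimately show ?thesis by (simp add: mult_ac)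
qed

lemma maximizer_strongly_monotone:
  assumes "d1 \<noteq> 0" "y1 \<in> C" "inner y1 d1 = \<sigma> d1" "d2 \<noteq> 0" "y2 \<in> C" "inner y2 d2 = \<sigma> d2"
  shows "\<alpha> * (\<sigma> d1 + \<sigma> d2) * g (y1 - y2) powr p \<le> inner (d1 - d2) (y1 - y2)"
proof -
  have "\<alpha> * \<sigma> d1 * g (y1 - y2) powr p \<le> inner d1 (y1 - y2)"
    using scaling_at_maximizer[OF assms(1-3) maximizer_gauge_eq_1[OF assms(4-6)]] .
  moreover have "\<alpha> * \<sigma> d2 * g (y2 - y1) powr p \<le> inner d2 (y2 - y1)"
    using scaling_at_maximizer[OF assms(4-6) maximizer_gauge_eq_1[OF assms(1-3)]] .
  ultimately show ?thesis using gauge_minus_commute[of y1 y2]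
    by (simp add: inner_diff_left inner_diff_right algebra_simps)
qed

end

locale conjugate_scaling_body = sphere_scaling_body +
  fixes q :: real
  assumes p: "1 < p" and q: "1 < q" and conjugate: "(p - 1) * (q - 1) = 1"
begin

lemma maximizer_holder:
  assumes "d1 \<noteq> 0" "y1 \<in> C" "inner y1 d1 = \<sigma> d1" "d2 \<noteq> 0" "y2 \<in> C" "inner y2 d2 = \<sigma> d2"
  shows "g (y1 - y2) \<le> (\<sigma> (d1 - d2) / (\<alpha> * (\<sigma> d1 + \<sigma> d2))) powr (q - 1)"
proof (cases "y1 = y2")
  case False
  define G S where "G = g (y1 - y2)" and "S = \<sigma> d1 + \<sigma> d2"
  have G: "G > 0" unfolding G_def using gauge_pos False by simp
  have S: "S > 0" unfolding S_def using support_pos assms by (simp add: add_pos_pos)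
  have "G * (\<alpha> * S * G powr (p - 1)) = \<alpha> * S * G powr p"
    using powr_mult_base[of G "p - 1"] G by (simp add: mult_ac)
  also have "\<dots> \<le> inner (d1 - d2) (y1 - y2)"
    using maximizer_strongly_monotone[OF assms] unfolding S_def G_def .
  also have "\<dots> \<le> G * \<sigma> (d1 - d2)"
    using inner_le_gauge_support[of "y1 - y2" "d1 - d2"] unfolding G_def by (simp add: inner_commute)
  finally have "G powr (p - 1) \<le> \<sigma> (d1 - d2) / (\<alpha> * S)"
    using G S \<alpha> by (simp add: field_simps)
  then have "(G powr (p - 1)) powr (q - 1) \<le> (\<sigma> (d1 - d2) / (\<alpha> * S)) powr (q - 1)"
    using q by (intro powr_mono2) auto
  then show ?thesis using G conjugate unfolding G_def S_def by (simp add: powr_powr)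
qed simp

lemma support_remainder_le:
  assumes "d \<noteq> 0"
  shows "\<sigma> z - \<sigma> d - inner (maximizer d) (z - d) \<le> (1 / (\<alpha> * \<sigma> d)) powr (q - 1) * \<sigma> (z - d) powr q"
proof (cases "z = 0")
  case True then show ?thesis using maximizer[of d] by simp
next
  case False
  have \<sigma>d: "\<sigma> d > 0" using support_pos[OF assms] .
  have "\<sigma> z - \<sigma> d - inner (maximizer d) (z - d) = inner (maximizer z - maximizer d) z"
    using maximizer[of d] maximizer[of z] by (simp add: inner_diff_left inner_diff_right)
  also have "\<dots> \<le> inner (maximizer z - maximizer d) (z - d)"
    using inner_le_support[OF maximizer(1)[of z], of d] maximizer[of d]
    by (simp add: inner_diff_left inner_diff_right)
  also have "\<dots> \<le> g (maximizer z - maximizer d) * \<sigma> (z - d)" by (rule inner_le_gauge_support)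
  also have "\<dots> \<le> (\<sigma> (z - d) / (\<alpha> * (\<sigma> z + \<sigma> d))) powr (q - 1) * \<sigma> (z - d)"
    using maximizer_holder[OF False maximizer[of z] assms maximizer[of d]] support_nonneg
    by (simp add: mult_right_mono)
  also have "\<dots> \<le> (\<sigma> (z - d) / (\<alpha> * \<sigma> d)) powr (q - 1) * \<sigma> (z - d)"
    using \<alpha> \<sigma>d support_nonneg[of z] support_nonneg[of "z - d"] q
    by (intro mult_right_mono powr_mono2 divide_left_mono mult_pos_pos) auto
  also have "\<dots> = (1 / (\<alpha> * \<sigma> d)) powr (q - 1) * \<sigma> (z - d) powr q"
    using powr_mult_base[of "\<sigma> (z - d)" "q - 1"] support_nonneg[of "z - d"]
    by (simp add: powr_divide powr_mult divide_simps mult.commute)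
  finally show ?thesis .
qed

lemma support_has_derivative:
  assumes "d \<noteq> 0" shows "(\<sigma> has_derivative inner (maximizer d)) (at d)"
proof -
  obtain R where R: "0 < R" "\<forall>d. \<sigma> d \<le> R * norm d" by (rule support_le_norm)
  define M where "M = (1 / (\<alpha> * \<sigma> d)) powr (q - 1) * R powr q"
  show ?thesis
  proof (rule has_derivative_of_powr_remainder[OF q, of M])
    show "0 \<le> M" unfolding M_def by simp
    fix z
    have "\<sigma> (z - d) powr q \<le> (R * norm (z - d)) powr q"
      using R support_nonneg q by (intro powr_mono2) auto
    then have "\<sigma> z - \<sigma> d - inner (maximizer d) (z - d) \<le> M * norm (z - d) powr q"
      using support_remainder_le[OF assms, of z] R unfolding M_def
      by (smt (verit) mult_left_mono powr_ge_zero powr_mult mult.assoc)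
    then show "\<bar>\<sigma> z - \<sigma> d - inner (maximizer d) (z - d)\<bar> \<le> M * norm (z - d) powr q"
      using support_above_tangent[of d z] by simp
  qed
qed

lemma support_powr_weighted_maximizer_holder:
  assumes "a \<noteq> 0" "b \<noteq> 0"
  shows "\<sigma> a powr (q - 1) * g (maximizer a - maximizer b) \<le> (1 / \<alpha>) powr (q - 1) * \<sigma> (a - b) powr (q - 1)"
proof -
  have \<sigma>a: "\<sigma> a > 0" using support_pos assms by auto
  have "\<sigma> a powr (q - 1) * g (maximizer a - maximizer b)
      \<le> \<sigma> a powr (q - 1) * (\<sigma> (a - b) / (\<alpha> * (\<sigma> a + \<sigma> b))) powr (q - 1)"
    using maximizer_holder[OF assms(1) maximizer assms(2) maximizer] by (simp add: mult_left_mono)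
  also have "\<dots> = (\<sigma> a / (\<sigma> a + \<sigma> b) * (\<sigma> (a - b) / \<alpha>)) powr (q - 1)"
    using \<sigma>a support_nonneg[of b] by (simp add: powr_mult[symmetric] field_simps)
  also have "\<dots> \<le> (\<sigma> (a - b) / \<alpha>) powr (q - 1)"
    using \<sigma>a support_nonneg[of b] support_nonneg[of "a - b"] \<alpha> q
    by (intro powr_mono2 mult_left_le_one_le) auto
  also have "\<dots> = (1 / \<alpha>) powr (q - 1) * \<sigma> (a - b) powr (q - 1)"
    using support_nonneg \<alpha> by (simp add: powr_mult[symmetric])
  finally show ?thesis .
qed

lemma support_powr_grad_holder_ordered:
  assumes "\<sigma> b \<le> \<sigma> a" "q \<le> 2"
  shows "g (support_powr_grad q a - support_powr_grad q b)
    \<le> q * ((1 / \<alpha>) powr (q - 1) + 1) * \<sigma> (a - b) powr (q - 1)"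
proof -
  define S where "S = \<sigma> (a - b) powr (q - 1)"
  have diff: "\<sigma> a powr (q - 1) - \<sigma> b powr (q - 1) \<le> S"
    unfolding S_def using support_powr_diff_le[of "q - 1"] q assms by simp
  consider "a = 0" | "a \<noteq> 0" "b = 0" | "a \<noteq> 0" "b \<noteq> 0" by blast
  then have "g (support_powr_grad q a - support_powr_grad q b) \<le> q * ((1 / \<alpha>) powr (q - 1) * S + S)"
  proof cases
    case 1
    then have "b = 0" using assms support_pos by force
    then show ?thesis using 1 q by (simp add: support_powr_grad_def S_def)
  next
    case 2
    have "g (support_powr_grad q a - support_powr_grad q b) = q * \<sigma> a powr (q - 1) * g (maximizer a)"
      using 2 q unfolding support_powr_grad_def by (simp add: gauge_scaleR)
    also have "\<dots> \<le> q * S"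
      using 2 q maximizer(1)[of a] mem_iff_gauge_le_1 unfolding S_def by (simp add: mult_left_le)
    also have "\<dots> \<le> q * ((1 / \<alpha>) powr (q - 1) * S + S)"
      using q unfolding S_def by (intro mult_left_mono) auto
    finally show ?thesis .
  next
    case 3
    have "(\<sigma> a powr (q - 1) - \<sigma> b powr (q - 1)) * g (maximizer b) \<le> S"
      using diff maximizer(1)[of b] mem_iff_gauge_le_1 gauge_nonneg assms q support_nonneg
      by (smt (verit) mult_left_le mult_nonneg_nonneg powr_mono2)
    then show ?thesis
      using support_powr_grad_diff_le[of q b a] support_powr_weighted_maximizer_holder[OF 3] q assms
      unfolding S_def by (smt (verit) mult_left_mono)
  qed
  then show ?thesis unfolding S_def by (simp add: algebra_simps)
qed

lemma support_powr_grad_holder: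
  assumes "q \<le> 2"
  shows "g (support_powr_grad q a - support_powr_grad q b)
    \<le> q * ((1 / \<alpha>) powr (q - 1) + 1) * \<sigma> (a - b) powr (q - 1)"
  using support_powr_grad_holder_ordered[OF _ assms, of a b] support_powr_grad_holder_ordered[OF _ assms, of b a]
    gauge_minus_commute support_minus_commute by (cases "\<sigma> b \<le> \<sigma> a") auto

lemma support_powr_below_tangent:
  assumes "q \<le> 2"
  shows "\<sigma> z powr q \<le> \<sigma> a powr q + inner (support_powr_grad q a) (z - a)
    + q * ((1 / \<alpha>) powr (q - 1) + 1) * \<sigma> (z - a) powr q"
proof -
  have "\<sigma> z powr q - \<sigma> a powr q - inner (support_powr_grad q a) (z - a)
      \<le> inner (support_powr_grad q z - support_powr_grad q a) (z - a)"
    using support_powr_above_tangent[of q z a] q by (simp add: inner_diff_left inner_diff_right)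
  also have "\<dots> \<le> g (support_powr_grad q z - support_powr_grad q a) * \<sigma> (z - a)"
    by (rule inner_le_gauge_support)
  also have "\<dots> \<le> q * ((1 / \<alpha>) powr (q - 1) + 1) * \<sigma> (z - a) powr (q - 1) * \<sigma> (z - a)"
    using support_powr_grad_holder[OF assms] support_nonneg by (simp add: mult_right_mono)
  also have "\<dots> = q * ((1 / \<alpha>) powr (q - 1) + 1) * \<sigma> (z - a) powr q"
    using powr_mult_base[of "\<sigma> (z - a)" "q - 1"] support_nonneg by (simp add: mult_ac)
  finally show ?thesis by simp
qed

end

context symmetric_convex_body
begin

lemma sphere_scaling_inequality_iff: "sphere_scaling_inequality C p \<longleftrightarrow> (\<exists>\<alpha>. sphere_scaling_body C \<alpha> p)"
  unfolding sphere_scaling_inequality_def sphere_scaling_body_def sphere_scaling_body_axioms_def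
  using symmetric_convex_body_axioms by blast

lemma sphere_scaling_imp_gauge_uniformly_convex:
  assumes "sphere_scaling_inequality C p" "2 \<le> p" shows "gauge_uniformly_convex C p"
proof -
  obtain \<alpha> where "sphere_scaling_body C \<alpha> p" using assms(1) sphere_scaling_inequality_iff by blast
  then interpret sphere_scaling_body C \<alpha> p .
  define \<beta> where "\<beta> = min (\<alpha>/2) 1 / 3 powr p"
  have \<beta>: "\<beta> > 0" unfolding \<beta>_def using \<alpha> by simp
  have "g (l *\<^sub>R x + (1 - l) *\<^sub>R y) powr p + \<beta> * (1/2) powr (p - 1) * l * (1 - l) * g (x - y) powr p
      \<le> l * g x powr p + (1 - l) * g y powr p" if "l \<in> {0..1}" for x y l
  proof (rule two_point_convexity_of_first_order_lower_bound)
    show "linear (\<lambda>h. p * g z powr (p - 1) * inner (dual_direction z) h)" for z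
      by (intro bounded_linear.linear bounded_linear_const_mult bounded_linear_inner_right)
    show "g z powr p + p * g z powr (p - 1) * inner (dual_direction z) (x - z)
        + \<beta> * g (x - z) powr p \<le> g x powr p" for x z
      unfolding \<beta>_def using gauge_powr_lower_bound[OF assms(2)] .
  qed (use that \<beta> assms(2) gauge_nonneg gauge_scaleR in auto)
  then show ?thesis unfolding gauge_uniformly_convex_def using \<beta> assms(2)
    by (intro exI[of _ "p * \<beta> * (1/2) powr (p - 1)"]) auto
qed

lemma sphere_scaling_imp_support_holder_smooth:
  assumes "sphere_scaling_inequality C p" "1 < p" "1 < q" "(p - 1) * (q - 1) = 1"
  shows "support_holder_smooth C q"
proof -
  obtain \<alpha> where "sphere_scaling_body C \<alpha> p" using assms(1) sphere_scaling_inequality_iff by blast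
  then interpret conjugate_scaling_body C \<alpha> p q
    using assms by (simp add: conjugate_scaling_body_def conjugate_scaling_body_axioms_def)
  note derivative = support_has_derivative
  define c where "c = (1 / (2 * \<alpha>)) powr (q - 1)"
  have "g (grad \<sigma> d1 - grad \<sigma> d2) \<le> c * \<sigma> (d1 - d2) powr (q - 1)"
    if "\<sigma> d1 = 1" "\<sigma> d2 = 1" for d1 d2
  proof -
    have d: "d1 \<noteq> 0" "d2 \<noteq> 0" using that by auto
    have "g (grad \<sigma> d1 - grad \<sigma> d2) \<le> (\<sigma> (d1 - d2) / (\<alpha> * 2)) powr (q - 1)"
      using maximizer_holder[OF d(1) maximizer d(2) maximizer] that
        grad_eqI[OF derivative[OF d(1)]] grad_eqI[OF derivative[OF d(2)]] by simp
    also have "\<dots> = c * \<sigma> (d1 - d2) powr (q - 1)"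
      unfolding c_def using \<alpha> support_nonneg[of "d1 - d2"]
      by (simp add: powr_mult[symmetric] mult.commute)
    finally show ?thesis .
  qed
  moreover have "\<sigma> differentiable (at d)" if "\<sigma> d = 1" for d
    using that differentiableI[OF derivative[of d]] by fastforce
  moreover have "c > 0" unfolding c_def using \<alpha> by simp
  ultimately show ?thesis unfolding support_holder_smooth_def gauge_polar_eq_support by blast
qed

lemma sphere_scaling_imp_support_uniformly_smooth:
  assumes "sphere_scaling_inequality C p" "1 < p" "1 < q" "q \<le> 2" "(p - 1) * (q - 1) = 1"
  shows "support_uniformly_smooth C q"
proof -
  obtain \<alpha> where "sphere_scaling_body C \<alpha> p" using assms(1) sphere_scaling_inequality_iff by blast
  then interpret conjugate_scaling_body C \<alpha> p q
    using assms by (simp add: conjugate_scaling_body_def conjugate_scaling_body_axioms_def)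
  define L where "L = q * ((1 / \<alpha>) powr (q - 1) + 1)"
  have L: "L > 0" unfolding L_def using assms by (intro mult_pos_pos add_nonneg_pos) auto
  note upper = support_powr_below_tangent[OF assms(4), folded L_def]
  obtain R where R: "0 < R" "\<forall>d. \<sigma> d \<le> R * norm d" by (rule support_le_norm)
  have "((\<lambda>d. \<sigma> d powr q) has_derivative inner (support_powr_grad q a)) (at a)" for a
  proof (rule has_derivative_of_powr_remainder[of q "L * R powr q"])
    fix z
    have "\<sigma> z powr q - \<sigma> a powr q - inner (support_powr_grad q a) (z - a) \<le> L * \<sigma> (z - a) powr q"
      using upper[of z a] by simp
    also have "\<dots> \<le> L * (R * norm (z - a)) powr q"
      using L R support_nonneg assms by (intro mult_left_mono powr_mono2) auto
    finally show "\<bar>\<sigma> z powr q - \<sigma> a powr q - inner (support_powr_grad q a) (z - a)\<bar>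
        \<le> L * R powr q * norm (z - a) powr q"
      using support_powr_above_tangent[of q a z] assms R by (simp add: powr_mult mult.assoc)
  qed (use assms L R in auto)
  then have "(\<lambda>d. \<sigma> d powr q) differentiable_on UNIV"
    unfolding differentiable_on_def by (blast intro: differentiable_at_withinI differentiableI)
  moreover have "l * \<sigma> d powr q + (1 - l) * \<sigma> d' powr q
      \<le> \<sigma> (l *\<^sub>R d + (1 - l) *\<^sub>R d') powr q + 2 * L * l * (1 - l) * \<sigma> (d - d') powr q"
    if "l \<in> {0..1}" for d d' l
  proof (rule two_point_smoothness_of_first_order_upper_bound[where D = "\<lambda>z. inner (support_powr_grad q z)"])
    show "\<sigma> x powr q \<le> \<sigma> z powr q + inner (support_powr_grad q z) (x - z) + L * \<sigma> (x - z) powr q"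
      for x z using upper .
    show "linear (inner (support_powr_grad q z))" for z
      by (intro bounded_linear.linear bounded_linear_inner_right)
  qed (use that L assms support_nonneg support_scaleR in auto)
  ultimately show ?thesis unfolding support_uniformly_smooth_def gauge_polar_eq_support
    using L assms by (intro conjI exI[of _ "2 * L * q"]) auto
qed

lemma tilted_maximizer_displacement:
  assumes differentiable: "\<And>d. \<sigma> d = 1 \<Longrightarrow> \<sigma> differentiable (at d)"
    and holder: "\<And>d1 d2. \<sigma> d1 = 1 \<Longrightarrow> \<sigma> d2 = 1 \<Longrightarrow>
      g (grad \<sigma> d1 - grad \<sigma> d2) \<le> c * \<sigma> (d1 - d2) powr (q - 1)"
    and "0 \<le> c" "1 \<le> q" and d: "\<sigma> d = 1" "y \<in> C" "inner y d = 1" and "\<sigma> v = 1" "0 < t"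
  shows "g (maximizer (d + t *\<^sub>R v) - y) \<le> (c + 2) * 2 powr (q - 1) * t powr (q - 1)"
proof (cases "t \<le> 1/2")
  case True
  define s e where "s = \<sigma> (d + t *\<^sub>R v)" and "e = (d + t *\<^sub>R v) /\<^sub>R \<sigma> (d + t *\<^sub>R v)"
  have s: "1/2 \<le> s" "\<sigma> (e - d) \<le> 2 * t"
    using normalized_tilt_close[OF d(1) assms(8,9) True] unfolding s_def e_def by auto
  have "\<sigma> e = 1" "inner (maximizer (d + t *\<^sub>R v)) e = \<sigma> e"
    using s support_scaleR_nonneg[of "inverse s" "d + t *\<^sub>R v"] maximizer(2)[of "d + t *\<^sub>R v"]
    unfolding e_def s_def[symmetric] by simp_all
  then have "grad \<sigma> e = maximizer (d + t *\<^sub>R v)"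
    using grad_support_eq_maximizer[OF differentiable maximizer(1)] by blast
  moreover have "grad \<sigma> d = y" using grad_support_eq_maximizer[OF differentiable[OF d(1)] d(2)] d by simp
  ultimately have "g (maximizer (d + t *\<^sub>R v) - y) \<le> c * \<sigma> (e - d) powr (q - 1)"
    using holder[OF \<open>\<sigma> e = 1\<close> d(1)] by simp
  also have "\<dots> \<le> c * (2 * t) powr (q - 1)"
    using s assms support_nonneg by (intro mult_left_mono powr_mono2) auto
  also have "\<dots> \<le> (c + 2) * 2 powr (q - 1) * t powr (q - 1)"
    using assms by (simp add: powr_mult mult_right_mono)
  finally show ?thesis .
next
  case False
  have "g (maximizer (d + t *\<^sub>R v) - y) \<le> 2" using gauge_diff_le_2 maximizer(1) d(2) by blast
  also have "\<dots> \<le> 2 * (2 * t) powr (q - 1)"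
    using False assms by (simp add: ge_one_powr_ge_zero)
  also have "\<dots> \<le> (c + 2) * 2 powr (q - 1) * t powr (q - 1)"
    using assms by (simp add: powr_mult mult_right_mono)
  finally show ?thesis .
qed

lemma support_holder_smooth_imp_sphere_scaling:
  assumes "support_holder_smooth C q" "1 < p" "1 < q" "(p - 1) * (q - 1) = 1"
  shows "sphere_scaling_inequality C p"
proof -
  obtain c where c: "c > 0"
    and differentiable: "\<And>d. \<sigma> d = 1 \<Longrightarrow> \<sigma> differentiable (at d)"
    and holder: "\<And>d1 d2. \<sigma> d1 = 1 \<Longrightarrow> \<sigma> d2 = 1 \<Longrightarrow>
      g (grad \<sigma> d1 - grad \<sigma> d2) \<le> c * \<sigma> (d1 - d2) powr (q - 1)"
    using assms unfolding support_holder_smooth_def gauge_polar_eq_support by blast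
  define K where "K = (c + 2) * 2 powr (q - 1)"
  have "t * g (x - y) - K * t powr q \<le> inner d (y - x)"
    if xy: "g x = 1" "g y = 1" "\<sigma> d = 1" "inner y d = 1" and t: "t > 0" for x y d t
  proof -
    obtain v where v: "\<sigma> v = 1" "inner (x - y) v = g (x - y)" using norming_direction by blast
    have C: "x \<in> C" "y \<in> C" using xy mem_iff_gauge_le_1 by auto
    have "t * inner (x - y) v - t * g (maximizer (d + t *\<^sub>R v) - y) \<le> inner d (y - x)"
      by (rule tilted_maximizer_gap[OF C(1) maximizer v(1)]) (use xy t in simp_all)
    then have "t * g (x - y) - t * g (maximizer (d + t *\<^sub>R v) - y) \<le> inner d (y - x)"
      using v by simp
    moreover have "g (maximizer (d + t *\<^sub>R v) - y) \<le> K * t powr (q - 1)"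
      unfolding K_def using differentiable holder c assms xy C v t
      by (intro tilted_maximizer_displacement) auto
    then have "t * g (maximizer (d + t *\<^sub>R v) - y) \<le> t * (K * t powr (q - 1))"
      by (rule mult_left_mono) (use t in simp)
    moreover have "t * (K * t powr (q - 1)) = K * t powr q"
      using powr_mult_base[of t "q - 1"] t by (simp add: mult_ac)
    ultimately show ?thesis by linarith
  qed
  moreover have "K > 0" unfolding K_def using c by simp
  ultimately show ?thesis using sphere_scaling_of_tradeoff[OF assms(2-4)] by blast
qed

lemma support_uniformly_smooth_imp_sphere_scaling:
  assumes "support_uniformly_smooth C q" "1 < p" "1 < q" "(p - 1) * (q - 1) = 1"
  shows "sphere_scaling_inequality C p"
proof -
  obtain c where c: "c > 0" and smooth: "\<And>d d' l. l \<in> {0..1} \<Longrightarrow>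
      l * \<sigma> d powr q + (1 - l) * \<sigma> d' powr q
        \<le> \<sigma> (l *\<^sub>R d + (1 - l) *\<^sub>R d') powr q + c / q * l * (1 - l) * \<sigma> (d - d') powr q"
    using assms unfolding support_uniformly_smooth_def gauge_polar_eq_support by blast
  define K where "K = c * 2 powr q / (2 * q * q)"
  have "t * g (x - y) - K * t powr q \<le> inner d (y - x)"
    if xy: "g x = 1" "g y = 1" "\<sigma> d = 1" "inner y d = 1" and t: "t > 0" for x y d t
  proof -
    obtain v where v: "\<sigma> v = 1" "inner (x - y) v = g (x - y)" using norming_direction by blast
    have C: "x \<in> C" "y \<in> C" using xy mem_iff_gauge_le_1 by auto
    define d1 d2 where "d1 = d + t *\<^sub>R v" and "d2 = d - t *\<^sub>R v"
    have "(1/2) *\<^sub>R d1 + (1 - 1/2) *\<^sub>R d2 = d" "\<sigma> (d1 - d2) = 2 * t"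
      using support_scaleR_nonneg[of "2 * t" v] t v unfolding d1_def d2_def
      by (simp_all add: scaleR_2[symmetric] algebra_simps)
    then have "\<sigma> d1 powr q + \<sigma> d2 powr q \<le> 2 + c / q / 2 * 2 powr q * t powr q"
      using smooth[of "1/2" d1 d2] xy(3) t by (simp add: powr_mult algebra_simps)
    moreover have "1 + q * (\<sigma> d1 - 1) \<le> \<sigma> d1 powr q" "1 + q * (\<sigma> d2 - 1) \<le> \<sigma> d2 powr q"
      using powr_above_tangent[of q _ 1] assms support_nonneg by simp_all
    moreover have "q * (K * t powr q) = c / q / 2 * 2 powr q * t powr q"
      unfolding K_def using assms by (simp add: field_simps)
    ultimately have "q * (\<sigma> d1 - 1) + q * (\<sigma> d2 - 1) \<le> q * (K * t powr q)"
      by linarith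
    then have "q * (\<sigma> d1 + \<sigma> d2 - 2) \<le> q * (K * t powr q)"
      by (simp add: algebra_simps)
    then have "\<sigma> d1 + \<sigma> d2 - 2 \<le> K * t powr q" using assms by simp
    moreover have "inner x d + t * inner x v \<le> \<sigma> d1" "1 - t * inner y v \<le> \<sigma> d2"
      using inner_le_support[OF C(1), of d1] inner_le_support[OF C(2), of d2] xy
      unfolding d1_def d2_def by (simp_all add: inner_add_right inner_diff_right)
    ultimately show ?thesis
      using v xy by (simp add: inner_diff_left inner_diff_right inner_commute algebra_simps)
  qed
  moreover have "K > 0" unfolding K_def using c assms by simp
  ultimately show ?thesis using sphere_scaling_of_tradeoff[OF assms(2-4)] by blast
qed

lemma sphere_scaling_characterizations:
  assumes "2 \<le> p" "1 < q" "q \<le> 2" "(p - 1) * (q - 1) = 1"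
  shows "set_mid_convex C p \<longleftrightarrow> sphere_scaling_inequality C p"
    and "scaling_inequality C p \<longleftrightarrow> sphere_scaling_inequality C p"
    and "modulus_convexity_power_bound C p \<longleftrightarrow> sphere_scaling_inequality C p"
    and "support_holder_smooth C q \<longleftrightarrow> sphere_scaling_inequality C p"
    and "support_uniformly_smooth C q \<longleftrightarrow> sphere_scaling_inequality C p"
    and "gauge_uniformly_convex C p \<longleftrightarrow> sphere_scaling_inequality C p"
proof -
  have p: "0 \<le> p" "1 \<le> p" "1 < p" using assms by auto
  have cycle: "gauge_mid_convex C p \<longleftrightarrow> sphere_scaling_inequality C p"
    "gauge_uniformly_convex C p \<longleftrightarrow> sphere_scaling_inequality C p"
    "scaling_inequality C p \<longleftrightarrow> sphere_scaling_inequality C p"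
    using gauge_uniformly_convex_imp_gauge_mid_convex[OF _ p(2)] gauge_mid_convex_imp_scaling_inequality
      scaling_inequality_imp_sphere_scaling sphere_scaling_imp_gauge_uniformly_convex[OF _ assms(1)]
    by blast+
  then show "set_mid_convex C p \<longleftrightarrow> sphere_scaling_inequality C p"
    "scaling_inequality C p \<longleftrightarrow> sphere_scaling_inequality C p"
    "gauge_uniformly_convex C p \<longleftrightarrow> sphere_scaling_inequality C p"
    unfolding set_mid_convex_iff_gauge_mid_convex by blast+
  show "modulus_convexity_power_bound C p \<longleftrightarrow> sphere_scaling_inequality C p"
    using cycle(1) gauge_mid_convex_imp_modulus_bound[OF _ p(1)] modulus_bound_imp_sphere_scaling
    by blast
  show "support_holder_smooth C q \<longleftrightarrow> sphere_scaling_inequality C p"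
    using support_holder_smooth_imp_sphere_scaling sphere_scaling_imp_support_holder_smooth
      p(3) assms(2,4) by blast
  show "support_uniformly_smooth C q \<longleftrightarrow> sphere_scaling_inequality C p"
    using support_uniformly_smooth_imp_sphere_scaling sphere_scaling_imp_support_uniformly_smooth
      p(3) assms(2-4) by blast
qed

end

theorem mainTheorem1:
  fixes C :: "'a::euclidean_space set" and p q :: real
  assumes "p \<ge> 2" and "1 < q" and "q \<le> 2" and "1/p + 1/q = 1"
    and "compact C" and "convex C" and "\<forall>x\<in>C. - x \<in> C" and "interior C \<noteq> {}"
  shows
   "let
      A = (\<exists>\<alpha>>0. \<forall>x\<in>C. \<forall>y\<in>C.
             {(1/2) *\<^sub>R (x + y) + (\<alpha> * gauge C (x - y) powr p) *\<^sub>R b | b. gauge C b \<le> 1} \<subseteq> C);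
      B = (\<exists>\<alpha>>0. \<forall>x\<in>C. \<forall>y\<in>frontier C. \<forall>d. d \<in> normal_cone C y \<longrightarrow>
             inner d (y - x) \<ge> \<alpha> * gauge (polar C) d * gauge C (y - x) powr p);
      Cc = (\<exists>\<alpha>>0. \<forall>\<epsilon>\<in>{0..2}. modulus_convexity C \<epsilon> \<ge> \<alpha> * \<epsilon> powr p);
      D = (\<exists>c>0. (\<forall>d. gauge (polar C) d = 1 \<longrightarrow> support_fun C differentiable (at d)) \<and>
             (\<forall>d1 d2. gauge (polar C) d1 = 1 \<longrightarrow> gauge (polar C) d2 = 1 \<longrightarrow>
                gauge C (grad (support_fun C) d1 - grad (support_fun C) d2)
                  \<le> c * gauge (polar C) (d1 - d2) powr (q - 1)));
      E = ((\<lambda>d. support_fun C d powr q) differentiable_on UNIV \<and>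
           (\<exists>c>0. \<forall>d d'. \<forall>l\<in>{0..1}.
              support_fun C (l *\<^sub>R d + (1 - l) *\<^sub>R d') powr q
                + c / q * l * (1 - l) * gauge (polar C) (d - d') powr q
              \<ge> l * support_fun C d powr q + (1 - l) * support_fun C d' powr q));
      F = (\<exists>\<alpha>>0. \<forall>x y. \<forall>l\<in>{0..1}.
              gauge C (l *\<^sub>R x + (1 - l) *\<^sub>R y) powr p
                + \<alpha> / p * l * (1 - l) * gauge C (x - y) powr p
              \<le> l * gauge C x powr p + (1 - l) * gauge C y powr p)
    in (A \<longleftrightarrow> B) \<and> (A \<longleftrightarrow> Cc) \<and> (A \<longleftrightarrow> D) \<and> (A \<longleftrightarrow> E) \<and> (A \<longleftrightarrow> F)"
proof -
  interpret symmetric_convex_body C using assms by unfold_locales auto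
  have "(p - 1) * (q - 1) = 1"
    using assms by (intro conjugate_exponents_product) auto
  note characterizations = sphere_scaling_characterizations[OF assms(1-3) this]
  show ?thesis
    using characterizations
    unfolding Let_def set_mid_convex_def scaling_inequality_def modulus_convexity_power_bound_def
      support_holder_smooth_def support_uniformly_smooth_def gauge_uniformly_convex_def
    by blast
qed

end
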